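(* Suppose $|\langle\Theta\rangle|$ divides $\alpha$ and $|\langle\theta\rangle|$ divides $\beta$. Let $\mathcal{C}=\mathcal{C}'\otimes\mathscr{C}$ be an $\mathbb{F}_q\mathcal{R}$-skew cyclic code of length $(\alpha,\beta)$, where $\mathcal{C}'=\langle f(x)\rangle$ is a skew cyclic code of length $\alpha$ over $\mathbb{F}_q$ and $\mathscr{C}=\xi_1\mathcal{C}_1\oplus\xi_2\mathcal{C}_2=\langle \xi_1g_1(x)+\xi_2g_2(x)\rangle$ is a skew cyclic code of length $\beta$ over $\mathcal{R}$ with $\mathcal{C}_i=\langle g_i(x)\rangle$ skew cyclic over $\mathbb{F}_q$, and $x^\alpha-1=h(x)f(x)$, $x^\beta-1=h_i(x)g_i(x)$ for $i=1,2$. If $h^\dagger(x)h(x)$ is divisible by $x^\alpha-1$ from the right side and $h_i^\dagger(x)h_i(x)$ is divisible by $x^\beta-1$ from the right side for $i=1,2$, then there exists a quantum code with parameters $[[\alpha+2\beta,\,2k-(\alpha+2\beta),\,d_H]]_q$, where $k$ is the dimension and $d_H$ the minimum Hamming distance of the $\mathbb{F}_q$-linear code $\varphi(\mathcal{C})$.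
   Context: Let $p$ be a prime, $q=p^m$, $\mathcal{R}=\mathbb{F}_q[u]/\langle u^2-u\rangle$, $\xi_1=1-u$, $\xi_2=u$; every $r\in\mathcal{R}$ is uniquely $\xi_1r_1+\xi_2r_2$, $r_1,r_2\in\mathbb{F}_q$. Fix $i$; $\Theta(a)=a^{p^i}$ on $\mathbb{F}_q$, $\theta(a+ub)=a^{p^i}+ub^{p^i}$ on $\mathcal{R}$, $\eta(a+ub)=a$; $|\langle\cdot\rangle|$ denotes the order of an automorphism. $\mathbb{F}_q[x;\Theta]$ is the skew polynomial ring with $(ax^i)(bx^j)=a\Theta^i(b)x^{i+j}$. A skew cyclic code of length $n$ over $\mathbb{F}_q$ is a linear code closed under $(c_0,\dots,c_{n-1})\mapsto(\Theta(c_{n-1}),\Theta(c_0),\dots,\Theta(c_{n-2}))$, identified with the left submodule $\langle g(x)\rangle$ of $\mathbb{F}_q[x;\Theta]/\langle x^n-1\rangle$ generated by a right divisor $g$ of $x^n-1$; skew cyclic codes over $\mathcal{R}$ are defined analogously with $\theta$. An $\mathbb{F}_q\mathcal{R}$-skew cyclic code of length $(\alpha,\beta)$ is an $\mathcal{R}$-submodule of $\mathbb{F}_q^\alpha\times\mathcal{R}^\beta$ (with $s*(x,y)=(\eta(s)x,sy)$ componentwise) closed under $\sigma(x_0,\dots,x_{\alpha-1},y_0,\dots,y_{\beta-1})=(\Theta(x_{\alpha-1}),\Theta(x_0),\dots,\Theta(x_{\alpha-2}),\theta(y_{\beta-1}),\theta(y_0),\dots,\theta(y_{\beta-2}))$;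 $A\otimes B=\{(a,b):a\in A,b\in B\}$. For $h(x)=h_0+\dots+h_sx^s$, $h^\dagger(x)=h_s+\Theta(h_{s-1})x+\dots+\Theta^s(h_0)x^s$; "divisible by $b(x)$ from the right side" means equal to $c(x)b(x)$ for some $c(x)$. Fix $M\in GL_2(\mathbb{F}_q)$ with $MM^T=\gamma I_2$, $\gamma\in\mathbb{F}_q^*$; the Gray map is $\varphi(a_0,\dots,a_{\alpha-1},r_0,\dots,r_{\beta-1})=(a_0,\dots,a_{\alpha-1},(r_{0,1},r_{0,2})M,\dots,(r_{\beta-1,1},r_{\beta-1,2})M)\in\mathbb{F}_q^{\alpha+2\beta}$, where $r_j=\xi_1r_{j,1}+\xi_2r_{j,2}$. A $q$-ary quantum code $[[n,K,d]]_q$ is a $q^K$-dimensional subspace of $(\mathbb{C}^q)^{\otimes n}$ with minimum distance $d$. *)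

theory Defs
  imports "HOL-Analysis.Analysis" "HOL-Computational_Algebra.Polynomial" "HOL-Library.Function_Algebras"
begin

text \<open>Skew polynomials are represented by their coefficient sequences (type 'a poly);
  only the multiplication differs: (a x^i)(b x^j) = a Theta^i(b) x^(i+j).\<close>

definition skew_mult :: "('a::comm_ring_1 \<Rightarrow> 'a) \<Rightarrow> 'a poly \<Rightarrow> 'a poly \<Rightarrow> 'a poly" where
  "skew_mult Th f g =
     (\<Sum>i\<le>degree f. \<Sum>j\<le>degree g. monom (coeff f i * (Th ^^ i) (coeff g j)) (i + j))"

definition xn1 :: "nat \<Rightarrow> 'a::comm_ring_1 poly" where
  "xn1 n = monom 1 n - 1"

definition skew_dagger :: "('a::comm_ring_1 \<Rightarrow> 'a) \<Rightarrow> 'a poly \<Rightarrow> 'a poly" where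
  "skew_dagger Th h = (\<Sum>j\<le>degree h. monom ((Th ^^ j) (coeff h (degree h - j))) j)"

definition right_dvd :: "('a::comm_ring_1 \<Rightarrow> 'a) \<Rightarrow> 'a poly \<Rightarrow> 'a poly \<Rightarrow> bool" where
  "right_dvd Th b a \<longleftrightarrow> (\<exists>c. a = skew_mult Th c b)"

definition aut_order :: "('b \<Rightarrow> 'b) \<Rightarrow> nat" where
  "aut_order T = (LEAST t. t > 0 \<and> T ^^ t = id)"

text \<open>The code <g(x)> of length n: the left submodule of F_q[x;Theta]/<x^n-1> generated by g,
  elements represented by their residues of degree < n, written as coefficient vectors.\<close>
definition skew_code_gen :: "('a::comm_ring_1 \<Rightarrow> 'a) \<Rightarrow> nat \<Rightarrow> 'a poly \<Rightarrow> 'a list set" where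
  "skew_code_gen Th n g =
     {map (coeff r) [0..<n] | r. degree r < n \<and>
        (\<exists>a c. r = skew_mult Th a g + skew_mult Th c (xn1 n))}"

section \<open>The ring R = F_q[u]/<u^2-u>\<close>

text \<open>An element a + u b of R is represented by the pair (a, b).\<close>
type_synonym 'a rring = "'a \<times> 'a"

definition R_add :: "'a::comm_ring_1 rring \<Rightarrow> 'a rring \<Rightarrow> 'a rring" where
  "R_add r s = (fst r + fst s, snd r + snd s)"

text \<open>(a + u b)(c + u d) = ac + u(ad + bc + bd), using u^2 = u.\<close>
definition R_mult :: "'a::comm_ring_1 rring \<Rightarrow> 'a rring \<Rightarrow> 'a rring" where
  "R_mult r s = (fst r * fst s, fst r * snd s + snd r * fst s + snd r * snd s)"

definition R_zero :: "'a::comm_ring_1 rring" where "R_zero = (0, 0)"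

definition R_of :: "'a::comm_ring_1 \<Rightarrow> 'a rring" where "R_of a = (a, 0)"

definition xi1 :: "'a::comm_ring_1 rring" where "xi1 = (1, -1)"   \<comment> \<open>1 - u\<close>
definition xi2 :: "'a::comm_ring_1 rring" where "xi2 = (0, 1)"    \<comment> \<open>u\<close>

text \<open>Components r = xi1 r1 + xi2 r2 (r1 = a, r2 = a + b for r = a + u b).\<close>
definition R_comp1 :: "'a::comm_ring_1 rring \<Rightarrow> 'a" where "R_comp1 r = fst r"
definition R_comp2 :: "'a::comm_ring_1 rring \<Rightarrow> 'a" where "R_comp2 r = fst r + snd r"

definition R_theta :: "('a \<Rightarrow> 'a) \<Rightarrow> 'a rring \<Rightarrow> 'a rring" where
  "R_theta Th r = (Th (fst r), Th (snd r))"

definition R_eta :: "'a rring \<Rightarrow> 'a" where "R_eta r = fst r"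

definition xi_sum :: "'a::comm_ring_1 list set \<Rightarrow> 'a list set \<Rightarrow> 'a rring list set" where
  "xi_sum C1 C2 = {map2 (\<lambda>a b. R_add (R_mult xi1 (R_of a)) (R_mult xi2 (R_of b))) c1 c2
                     | c1 c2. c1 \<in> C1 \<and> c2 \<in> C2 \<and> length c1 = length c2}"

type_synonym 'a mixed_word = "'a list \<times> 'a rring list"

definition skew_shift :: "('b \<Rightarrow> 'b) \<Rightarrow> 'b list \<Rightarrow> 'b list" where
  "skew_shift T xs = (if xs = [] then [] else map T (last xs # butlast xs))"

definition sigma_shift :: "('a \<Rightarrow> 'a) \<Rightarrow> 'a mixed_word \<Rightarrow> 'a mixed_word" where
  "sigma_shift Th w = (skew_shift Th (fst w), skew_shift (R_theta Th) (snd w))"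

definition mixed_add :: "'a::comm_ring_1 mixed_word \<Rightarrow> 'a mixed_word \<Rightarrow> 'a mixed_word" where
  "mixed_add v w = (map2 (+) (fst v) (fst w), map2 R_add (snd v) (snd w))"

definition mixed_smult :: "'a::comm_ring_1 rring \<Rightarrow> 'a mixed_word \<Rightarrow> 'a mixed_word" where
  "mixed_smult s w = (map (\<lambda>x. R_eta s * x) (fst w), map (R_mult s) (snd w))"

definition FqR_skew_cyclic ::
  "('a::comm_ring_1 \<Rightarrow> 'a) \<Rightarrow> nat \<Rightarrow> nat \<Rightarrow> 'a mixed_word set \<Rightarrow> bool" where
  "FqR_skew_cyclic Th \<alpha> \<beta> C \<longleftrightarrow>
     C \<subseteq> {w. length (fst w) = \<alpha> \<and> length (snd w) = \<beta>} \<and>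
     (replicate \<alpha> 0, replicate \<beta> R_zero) \<in> C \<and>
     (\<forall>v\<in>C. \<forall>w\<in>C. mixed_add v w \<in> C) \<and>
     (\<forall>s. \<forall>w\<in>C. mixed_smult s w \<in> C) \<and>
     (\<forall>w\<in>C. sigma_shift Th w \<in> C)"

definition code_tensor :: "'b set \<Rightarrow> 'c set \<Rightarrow> ('b \<times> 'c) set" where
  "code_tensor A B = {(a, b). a \<in> A \<and> b \<in> B}"

definition gray_pair :: "'a::comm_ring_1 ^2^2 \<Rightarrow> 'a rring \<Rightarrow> 'a list" where
  "gray_pair M r = (let v = vector_matrix_mult (vector [R_comp1 r, R_comp2 r]) M
                    in [v $ 1, v $ 2])"

definition gray :: "'a::comm_ring_1 ^2^2 \<Rightarrow> 'a mixed_word \<Rightarrow> 'a list" where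
  "gray M w = fst w @ concat (map (gray_pair M) (snd w))"

definition word_fun :: "'a::zero list \<Rightarrow> nat \<Rightarrow> 'a" where
  "word_fun xs = (\<lambda>i. if i < length xs then xs ! i else 0)"

definition code_dim :: "'a::field list set \<Rightarrow> nat" where
  "code_dim C = vector_space.dim (\<lambda>c v. (\<lambda>i. c * v i)) (word_fun ` C)"

definition hamming_dist :: "'b list \<Rightarrow> 'b list \<Rightarrow> nat" where
  "hamming_dist x y = card {i. i < length x \<and> x ! i \<noteq> y ! i}"

definition min_dist :: "'b list set \<Rightarrow> nat" where
  "min_dist C = Min {hamming_dist x y | x y. x \<in> C \<and> y \<in> C \<and> x \<noteq> y}"

text \<open>(C^q)^(tensor n) is modelled as the space of complex functions on the computational
  basis F_q^n (words of length n); vectors vanish outside words of length n.\<close>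

definition abs_trace :: "nat \<Rightarrow> nat \<Rightarrow> 'a::comm_ring_1 \<Rightarrow> 'a" where
  "abs_trace p m z = (\<Sum>j<m. z ^ (p ^ j))"

text \<open>omega^(Tr z), omega = exp(2 pi i / p); Tr z lies in the prime field {0,...,p-1}.\<close>
definition add_char :: "nat \<Rightarrow> nat \<Rightarrow> 'a::comm_ring_1 \<Rightarrow> complex" where
  "add_char p m z = cis (2 * pi * real (THE t. t < p \<and> of_nat t = abs_trace p m z) / real p)"

definition word_dot :: "'a::comm_ring_1 list \<Rightarrow> 'a list \<Rightarrow> 'a" where
  "word_dot a b = sum_list (map2 (*) a b)"

text \<open>Error operator X(a) Z(b): |x> |-> omega^(Tr(b.x)) |x + a>.\<close>
definition pauli_err :: "nat \<Rightarrow> nat \<Rightarrow> nat \<Rightarrow> 'a::comm_ring_1 list \<Rightarrow> 'a list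
      \<Rightarrow> ('a list \<Rightarrow> complex) \<Rightarrow> ('a list \<Rightarrow> complex)" where
  "pauli_err p m n a b v = (\<lambda>y. if length y = n then
       add_char p m (word_dot b (map2 (-) y a)) * v (map2 (-) y a) else 0)"

definition pauli_weight :: "'a::zero list \<Rightarrow> 'a list \<Rightarrow> nat" where
  "pauli_weight a b = card {i. i < length a \<and> (a ! i \<noteq> 0 \<or> b ! i \<noteq> 0)}"

definition qinner :: "nat \<Rightarrow> ('a::finite list \<Rightarrow> complex) \<Rightarrow> ('a list \<Rightarrow> complex) \<Rightarrow> complex" where
  "qinner n u v = (\<Sum>x\<in>{x. length x = n}. cnj (u x) * v x)"

text \<open>A q-ary quantum code [[n, K, d]]_q (q = p^m): a q^K-dimensional subspace Q of
  (C^q)^(tensor n) detecting every error of weight less than d.\<close>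
definition quantum_code :: "nat \<Rightarrow> nat \<Rightarrow> nat \<Rightarrow> nat \<Rightarrow> nat
      \<Rightarrow> ('a::{finite,comm_ring_1} list \<Rightarrow> complex) set \<Rightarrow> bool" where
  "quantum_code p m n K d Q \<longleftrightarrow>
     (\<forall>v\<in>Q. \<forall>x. length x \<noteq> n \<longrightarrow> v x = 0) \<and>
     (\<lambda>x. 0) \<in> Q \<and>
     (\<forall>u\<in>Q. \<forall>v\<in>Q. (\<lambda>x. u x + v x) \<in> Q) \<and>
     (\<forall>c. \<forall>v\<in>Q. (\<lambda>x. c * v x) \<in> Q) \<and>
     vector_space.dim (\<lambda>c v. (\<lambda>x. c * v x)) Q = (p ^ m) ^ K \<and>
     (\<forall>a b. length a = n \<longrightarrow> length b = n \<longrightarrow> pauli_weight a b < d \<longrightarrow>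
        (\<exists>lam. \<forall>u\<in>Q. \<forall>v\<in>Q. qinner n u (pauli_err p m n a b v) = lam * qinner n u v))"

end

theory Submission
  imports Defs "HOL-Computational_Algebra.Primes"
begin

text \<open>
  Each skew cyclic component \<open>\<langle>g\<rangle>\<close> with \<open>x\<^sup>n - 1 = h g\<close> contains its Euclidean dual: a word
  \<open>w\<close> orthogonal to it satisfies \<open>w h \<equiv> 0\<close> modulo \<open>x\<^sup>n - 1 = g h\<close>, because the coefficients of
  that remainder are inner products of \<open>w\<close> with twisted circulant rows of \<open>h\<close>, and these rows
  are codewords since \<open>x\<^sup>n - 1\<close> right-divides \<open>h\<^sup>\<dagger> h\<close>, i.e. \<open>h\<^sup>\<dagger>\<close> is a left multiple of \<open>g\<close>.
  As \<open>M M\<^sup>T = \<gamma> I\<close> with \<open>\<gamma> \<noteq> 0\<close>, the Gray map turns inner products of images into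
  \<open>\<gamma>\<close>-multiples of componentwise inner products, so the image \<open>D\<close> of the code is a
  dual-containing linear code of length \<open>n = \<alpha> + 2\<beta>\<close>.

  The CSS construction then applies. The functions on \<open>D\<close> that are constant on the cosets of
  \<open>D\<^sup>\<perp>\<close> form a space of dimension \<open>|D / D\<^sup>\<perp>| = q\<^sup>2\<^sup>k\<^sup>-\<^sup>n\<close>, by \<open>|D| |D\<^sup>\<perp>| = q\<^sup>n\<close>
  (a character-sum count). An error \<open>X(a) Z(b)\<close> of weight below \<open>d(D)\<close> either has \<open>a \<notin> D\<close>
  and moves \<open>D\<close> off itself, or has \<open>a = 0\<close>; then either \<open>b = 0\<close>, or \<open>b \<notin> D = (D\<^sup>\<perp>)\<^sup>\<perp>\<close> and the
  resulting character sums vanish.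
\<close>

section \<open>Skew polynomials\<close>

locale ring_endo =
  fixes T :: "'a::comm_ring_1 \<Rightarrow> 'a"
  assumes hom_add: "T (a + b) = T a + T b"
    and hom_mult: "T (a * b) = T a * T b"
    and hom_one: "T 1 = 1"
begin

lemma hom_zero [simp]: "T 0 = 0"
  using hom_add[of 0 0] by simp

lemma hom_uminus: "T (- a) = - T a"
  using hom_add[of a "- a"] by (simp add: add_eq_0_iff)

lemma hom_diff: "T (a - b) = T a - T b"
  using hom_add[of a "- b"] by (simp add: hom_uminus)

lemma hom_sum: "T (sum g A) = (\<Sum>x\<in>A. T (g x))"
  by (induction A rule: infinite_finite_induct) (simp_all add: hom_add)

lemma ring_endo_funpow: "ring_endo (T ^^ n)"
  by (induction n) (simp_all add: ring_endo_def hom_add hom_mult hom_one)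

lemmas funpow_hom_add = ring_endo.hom_add[OF ring_endo_funpow]
  and funpow_hom_mult = ring_endo.hom_mult[OF ring_endo_funpow]
  and funpow_hom_one = ring_endo.hom_one[OF ring_endo_funpow]
  and funpow_hom_zero [simp] = ring_endo.hom_zero[OF ring_endo_funpow]
  and funpow_hom_diff = ring_endo.hom_diff[OF ring_endo_funpow]
  and funpow_hom_sum = ring_endo.hom_sum[OF ring_endo_funpow]

lemma coeff_skew_mult:
  "coeff (skew_mult T f g) k = (\<Sum>i\<le>k. coeff f i * (T ^^ i) (coeff g (k - i)))"
proof -
  have "coeff (skew_mult T f g) k =
      (\<Sum>i\<le>degree f. \<Sum>j\<le>degree g. if i + j = k then coeff f i * (T ^^ i) (coeff g j) else 0)"
    unfolding skew_mult_def by (simp add: coeff_sum coeff_monom)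
  also have "\<dots> = (\<Sum>i\<le>degree f. if i \<le> k then coeff f i * (T ^^ i) (coeff g (k - i)) else 0)"
  proof (rule sum.cong[OF refl])
    fix i
    show "(\<Sum>j\<le>degree g. if i + j = k then coeff f i * (T ^^ i) (coeff g j) else 0) =
          (if i \<le> k then coeff f i * (T ^^ i) (coeff g (k - i)) else 0)"
    proof (cases "i \<le> k \<and> k - i \<le> degree g")
      case True
      then have "(\<Sum>j\<le>degree g. if i + j = k then coeff f i * (T ^^ i) (coeff g j) else 0)
          = (\<Sum>j\<in>{k - i}. coeff f i * (T ^^ i) (coeff g j))"
        by (intro sum.mono_neutral_cong_right) auto
      then show ?thesis using True by simp
    next
      case False
      then show ?thesis by (auto intro!: sum.neutral simp: coeff_eq_0)
    qed
  qed
  also have "\<dots> = (\<Sum>i\<le>k. coeff f i * (T ^^ i) (coeff g (k - i)))"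
    by (subst sum.inter_filter[symmetric]) (auto intro!: sum.mono_neutral_left intro: le_degree)
  finally show ?thesis .
qed

lemma skew_mult_0_left [simp]: "skew_mult T 0 g = 0"
  by (rule poly_eqI) (simp add: coeff_skew_mult)

lemma skew_mult_0_right [simp]: "skew_mult T g 0 = 0"
  by (rule poly_eqI) (simp add: coeff_skew_mult)

lemma skew_mult_add_left: "skew_mult T (a + b) g = skew_mult T a g + skew_mult T b g"
  by (rule poly_eqI) (simp add: coeff_skew_mult distrib_right sum.distrib)

lemma skew_mult_diff_left: "skew_mult T (a - b) g = skew_mult T a g - skew_mult T b g"
  by (rule poly_eqI) (simp add: coeff_skew_mult left_diff_distrib sum_subtractf)

lemma skew_mult_diff_right: "skew_mult T g (a - b) = skew_mult T g a - skew_mult T g b"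
  by (rule poly_eqI) (simp add: coeff_skew_mult funpow_hom_diff right_diff_distrib sum_subtractf)

lemma skew_mult_smult_left: "skew_mult T (smult c a) g = smult c (skew_mult T a g)"
  by (rule poly_eqI) (simp add: coeff_skew_mult sum_distrib_left mult.assoc)

lemma skew_mult_assoc: "skew_mult T (skew_mult T a b) c = skew_mult T a (skew_mult T b c)"
proof (rule poly_eqI)
  fix k
  have "coeff (skew_mult T (skew_mult T a b) c) k =
      (\<Sum>(l, i)\<in>Sigma {..k} (\<lambda>l. {..l}).
         coeff a i * (T ^^ i) (coeff b (l - i)) * (T ^^ l) (coeff c (k - l)))"
    by (simp add: coeff_skew_mult sum_distrib_right sum.Sigma)
  also have "\<dots> = (\<Sum>(i, j)\<in>Sigma {..k} (\<lambda>i. {..k - i}).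
       coeff a i * (T ^^ i) (coeff b j) * (T ^^ (i + j)) (coeff c (k - i - j)))"
    by (rule sum.reindex_bij_witness[where i = "\<lambda>(i, j). (i + j, i)" and j = "\<lambda>(l, i). (i, l - i)"])
       (auto simp: add.commute diff_diff_eq)
  also have "\<dots> = coeff (skew_mult T a (skew_mult T b c)) k"
    by (simp add: coeff_skew_mult sum.Sigma funpow_hom_sum funpow_hom_mult sum_distrib_left
        funpow_add mult.assoc diff_diff_eq)
  finally show "coeff (skew_mult T (skew_mult T a b) c) k = coeff (skew_mult T a (skew_mult T b c)) k" .
qed

lemma coeff_skew_mult_eq_0:
  assumes "k > degree a + degree b"
  shows "coeff (skew_mult T a b) k = 0"
proof -
  have "coeff a i * (T ^^ i) (coeff b (k - i)) = 0" for i
    using assms by (cases "i > degree a") (simp_all add: coeff_eq_0)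
  then show ?thesis by (simp add: coeff_skew_mult)
qed

lemma degree_skew_mult_le: "degree (skew_mult T a b) \<le> degree a + degree b"
  by (rule degree_le) (auto intro: coeff_skew_mult_eq_0)

lemma coeff_skew_mult_degree_sum:
  "coeff (skew_mult T a b) (degree a + degree b) = lead_coeff a * (T ^^ degree a) (lead_coeff b)"
proof -
  have "coeff a i * (T ^^ i) (coeff b (degree a + degree b - i)) = 0" if "i \<noteq> degree a" for i
    using that by (cases "i > degree a") (simp_all add: coeff_eq_0)
  then have "(\<Sum>i\<le>degree a + degree b. coeff a i * (T ^^ i) (coeff b (degree a + degree b - i)))
     = (\<Sum>i\<in>{degree a}. coeff a i * (T ^^ i) (coeff b (degree a + degree b - i)))"
    by (intro sum.mono_neutral_right) auto
  then show ?thesis by (simp add: coeff_skew_mult)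
qed

lemma coeff_skew_mult_monom_left:
  "coeff (skew_mult T (monom 1 i) g) e = (if i \<le> e then (T ^^ i) (coeff g (e - i)) else 0)"
  by (simp add: coeff_skew_mult coeff_monom if_distrib[of "\<lambda>x. x * _"] sum.delta cong: if_cong)

lemma coeff_skew_mult_xn1_right:
  "coeff (skew_mult T c (xn1 n)) k = (if n \<le> k then coeff c (k - n) else 0) - coeff c k"
proof -
  have "coeff (skew_mult T c (xn1 n)) k =
     (\<Sum>i\<le>k. (if i = k - n \<and> n \<le> k then coeff c i else 0) - (if i = k then coeff c i else 0))"
    unfolding coeff_skew_mult
    by (intro sum.cong refl) (auto simp: xn1_def coeff_monom funpow_hom_diff funpow_hom_one)
  then show ?thesis by (simp add: sum_subtractf)
qed

lemma coeff_skew_mult_xn1_left: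
  assumes "T ^^ n = id"
  shows "coeff (skew_mult T (xn1 n) c) k = (if n \<le> k then coeff c (k - n) else 0) - coeff c k"
proof -
  have "coeff (skew_mult T (xn1 n) c) k =
     (\<Sum>i\<le>k. (if i = n \<and> n \<le> k then coeff c (k - n) else 0) - (if i = 0 then coeff c k else 0))"
    unfolding coeff_skew_mult
    using assms by (intro sum.cong refl) (auto simp: xn1_def coeff_monom left_diff_distrib)
  then show ?thesis by (simp add: sum_subtractf)
qed

lemma skew_mult_xn1_commute:
  assumes "T ^^ n = id"
  shows "skew_mult T (xn1 n) c = skew_mult T c (xn1 n)"
  by (rule poly_eqI) (simp add: coeff_skew_mult_xn1_left[OF assms] coeff_skew_mult_xn1_right)

end

lemma degree_xn1: "n > 0 \<Longrightarrow> degree (xn1 n :: 'a::comm_ring_1 poly) = n"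
  unfolding xn1_def diff_conv_add_uminus
  by (subst degree_add_eq_left) (simp_all add: degree_monom_eq)

lemma xn1_nonzero: "n > 0 \<Longrightarrow> xn1 n \<noteq> (0 :: 'a::comm_ring_1 poly)"
  using degree_xn1[of n, where 'a='a] by auto

locale inj_ring_endo = ring_endo T for T :: "'a::idom \<Rightarrow> 'a" +
  assumes inj: "inj T"
begin

lemma funpow_eq_0_iff [simp]: "(T ^^ n) a = 0 \<longleftrightarrow> a = 0"
  using inj_fn[OF inj, of n] funpow_hom_zero[of n] by (metis injD)

lemma degree_skew_mult:
  assumes "a \<noteq> 0" "b \<noteq> 0"
  shows "degree (skew_mult T a b) = degree a + degree b"
proof (rule antisym[OF degree_skew_mult_le le_degree])
  show "coeff (skew_mult T a b) (degree a + degree b) \<noteq> 0"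
    using assms by (simp add: coeff_skew_mult_degree_sum)
qed

lemma skew_mult_eq_0_iff: "skew_mult T a b = 0 \<longleftrightarrow> a = 0 \<or> b = 0"
proof -
  have "skew_mult T a b \<noteq> 0" if "a \<noteq> 0" "b \<noteq> 0"
    using that coeff_skew_mult_degree_sum[of a b] by (metis coeff_0 funpow_eq_0_iff
        leading_coeff_0_iff mult_eq_0_iff)
  then show ?thesis by auto
qed

lemma skew_mult_right_cancel:
  assumes "skew_mult T a g = skew_mult T b g" "g \<noteq> 0"
  shows "a = b"
  using assms skew_mult_eq_0_iff[of "a - b" g] by (simp add: skew_mult_diff_left)

lemma skew_mult_left_cancel:
  assumes "skew_mult T g a = skew_mult T g b" "g \<noteq> 0"
  shows "a = b"
  using assms skew_mult_eq_0_iff[of g "a - b"] by (simp add: skew_mult_diff_right)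

text \<open>Since \<open>x\<^sup>n - 1\<close> is central, \<open>h f h = (x\<^sup>n - 1) h = h (x\<^sup>n - 1)\<close>, and \<open>h\<close> cancels on the left.\<close>
lemma xn1_factor_commute:
  assumes "n > 0" "T ^^ n = id" "xn1 n = skew_mult T h f"
  shows "xn1 n = skew_mult T f h"
proof -
  have "h \<noteq> 0" using assms(3) xn1_nonzero[OF assms(1), where 'a='a] by auto
  moreover have "skew_mult T h (skew_mult T f h) = skew_mult T (xn1 n) h"
    by (simp add: assms(3) skew_mult_assoc)
  moreover have "\<dots> = skew_mult T h (xn1 n)"
    by (rule skew_mult_xn1_commute[OF assms(2)])
  ultimately show ?thesis by (metis skew_mult_left_cancel)
qed

end

locale field_endo = ring_endo T for T :: "'a::field \<Rightarrow> 'a"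

sublocale field_endo \<subseteq> inj_ring_endo
proof
  show "inj T"
  proof (rule injI, rule ccontr)
    fix a b assume "T a = T b" "a \<noteq> b"
    then have "T (a - b) * T (inverse (a - b)) = 0" by (simp add: hom_diff)
    moreover have "T (a - b) * T (inverse (a - b)) = 1"
      using \<open>a \<noteq> b\<close> by (simp add: hom_mult[symmetric] hom_one)
    ultimately show False by simp
  qed
qed

lemma coeff_skew_dagger:
  "coeff (skew_dagger T h) j = (if j \<le> degree h then (T ^^ j) (coeff h (degree h - j)) else 0)"
  unfolding skew_dagger_def by (simp add: coeff_sum coeff_monom sum.delta)

abbreviation word_add :: "'a::plus list \<Rightarrow> 'a list \<Rightarrow> 'a list" where
  "word_add x y \<equiv> map2 (+) x y"

abbreviation word_scale :: "'a::times \<Rightarrow> 'a list \<Rightarrow> 'a list" where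
  "word_scale c x \<equiv> map ((*) c) x"

definition linear_code :: "nat \<Rightarrow> 'a::comm_ring_1 list set \<Rightarrow> bool" where
  "linear_code n C \<longleftrightarrow> C \<subseteq> {x. length x = n} \<and> replicate n 0 \<in> C \<and>
     (\<forall>x\<in>C. \<forall>y\<in>C. word_add x y \<in> C) \<and> (\<forall>c. \<forall>x\<in>C. word_scale c x \<in> C)"

definition dual_code :: "nat \<Rightarrow> 'a::comm_ring_1 list set \<Rightarrow> 'a list set" where
  "dual_code n C = {y. length y = n \<and> (\<forall>x\<in>C. word_dot x y = 0)}"

lemma word_dot_Nil [simp]: "word_dot [] ys = 0" "word_dot xs [] = 0"
  by (simp_all add: word_dot_def)

lemma word_dot_Cons [simp]: "word_dot (x # xs) (y # ys) = x * y + word_dot xs ys"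
  by (simp add: word_dot_def)

lemma word_dot_append:
  "length a = length c \<Longrightarrow> word_dot (a @ b) (c @ d) = word_dot a c + word_dot b d"
  by (simp add: word_dot_def)

lemma word_dot_commute: "word_dot x y = word_dot y (x :: 'a::comm_ring_1 list)"
  by (induction x y rule: list_induct2') (simp_all add: mult.commute)

lemma word_dot_add_right:
  "length y = length z \<Longrightarrow> word_dot x (word_add y z) = word_dot x y + word_dot x z"
  for x y z :: "'a::comm_ring_1 list"
proof (induction x arbitrary: y z)
  case (Cons a x)
  then show ?case by (cases y; cases z) (simp_all add: algebra_simps)
qed simp

lemma word_dot_scale_right: "word_dot x (word_scale c y) = c * word_dot x (y :: 'a::comm_ring_1 list)"
  by (induction x y rule: list_induct2') (simp_all add: algebra_simps)

lemma word_dot_replicate_0_left [simp]: "word_dot (replicate k 0) (y :: 'a::comm_ring_1 list) = 0"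
  by (induction k arbitrary: y) (simp_all add: word_dot_def zip_Cons1 split: list.split)

lemma word_dot_replicate_0_right [simp]: "word_dot x (replicate k (0 :: 'a::comm_ring_1)) = 0"
  by (subst word_dot_commute) simp

lemma word_dot_conv_sum:
  "length x = n \<Longrightarrow> length y = n \<Longrightarrow> word_dot x y = (\<Sum>t<n. x ! t * y ! t)"
  by (simp add: word_dot_def sum_list_sum_nth atLeast0LessThan)

lemma linear_code_length: "linear_code n C \<Longrightarrow> x \<in> C \<Longrightarrow> length x = n"
  unfolding linear_code_def by auto

lemma linear_code_zero: "linear_code n C \<Longrightarrow> replicate n 0 \<in> C"
  unfolding linear_code_def by auto

lemma linear_code_add: "linear_code n C \<Longrightarrow> x \<in> C \<Longrightarrow> y \<in> C \<Longrightarrow> word_add x y \<in> C"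
  unfolding linear_code_def by auto

lemma linear_code_scale: "linear_code n C \<Longrightarrow> x \<in> C \<Longrightarrow> word_scale c x \<in> C"
  unfolding linear_code_def by auto

lemma linear_code_diff:
  assumes "linear_code n C" "x \<in> C" "y \<in> C"
  shows "map2 (-) x y \<in> C"
proof -
  have "map2 (-) x y = word_add x (word_scale (-1) y)"
    using assms by (intro nth_equalityI) (auto simp: linear_code_length)
  then show ?thesis using assms by (simp add: linear_code_add linear_code_scale)
qed

lemma linear_code_words: "linear_code n {x :: 'a::comm_ring_1 list. length x = n}"
  unfolding linear_code_def by auto

lemma linear_code_dual_code: "linear_code n (dual_code n C)"
  unfolding linear_code_def dual_code_def
  by (auto simp: word_dot_add_right word_dot_scale_right)

lemma word_add_assoc:
  "length x = length y \<Longrightarrow> length y = length z \<Longrightarrow>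
     word_add (word_add x y) z = word_add x (word_add y (z :: 'a::semigroup_add list))"
  by (intro nth_equalityI) (simp_all add: add.assoc)

lemma word_add_replicate_0: "length x = n \<Longrightarrow> word_add x (replicate n 0) = (x :: 'a::monoid_add list)"
  by (intro nth_equalityI) simp_all

lemma word_add_left_cancel:
  assumes "word_add x s = word_add x s'" "length s = length x" "length s' = length x"
  shows "s = (s' :: 'a::cancel_semigroup_add list)"
proof (rule nth_equalityI)
  fix i assume "i < length s"
  then show "s ! i = s' ! i" using arg_cong[OF assms(1), of "\<lambda>l. l ! i"] assms(2,3) by simp
qed (use assms in simp)

lemma word_add_scale_cancel:
  fixes x t :: "'a::comm_ring_1 list"
  assumes "length x = length t"
  shows "word_add (word_add x t) (word_scale (-1) t) = x"
    and "word_add (word_add x (word_scale (-1) t)) t = x"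
  using assms by (auto intro: nth_equalityI)

lemma bij_betw_word_add:
  assumes "linear_code n V" "t \<in> V"
  shows "bij_betw (\<lambda>y. word_add y t) V V"
proof (rule bij_betw_byWitness[where f' = "\<lambda>y. word_add y (word_scale (-1) t)"])
  show "(\<lambda>y. word_add y t) ` V \<subseteq> V" "(\<lambda>y. word_add y (word_scale (-1) t)) ` V \<subseteq> V"
    using assms by (auto intro: linear_code_add linear_code_scale)
qed (use assms in \<open>simp_all add: word_add_scale_cancel linear_code_length\<close>)

lemma finite_words: "finite {x :: 'a::finite list. length x = n}"
  using finite_lists_length_eq[of "UNIV :: 'a set" n] by simp

lemma card_words: "card {x :: 'a::finite list. length x = n} = CARD('a) ^ n"
  using card_lists_length_eq[of "UNIV :: 'a set" n] by simp

lemma linear_code_finite: "linear_code n (C :: 'a::{comm_ring_1,finite} list set) \<Longrightarrow> finite C"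
  using finite_subset[OF _ finite_words] unfolding linear_code_def by blast

section \<open>Dual-containing skew cyclic codes\<close>

lemma skew_code_genI:
  "degree r < n \<Longrightarrow> r = skew_mult T a g + skew_mult T c (xn1 n) \<Longrightarrow>
     map (coeff r) [0..<n] \<in> skew_code_gen T n g"
  unfolding skew_code_gen_def by blast

lemma map_coeff_Poly: "length w = n \<Longrightarrow> map (coeff (Poly w)) [0..<n] = w"
  by (intro nth_equalityI) (auto simp: nth_default_nth)

lemma degree_Poly_less: "length w = n \<Longrightarrow> n > 0 \<Longrightarrow> degree (Poly w) < n"
  by (rule degree_lessI) (auto simp: nth_default_def)

lemma (in ring_endo) skew_code_gen_add:
  assumes "x \<in> skew_code_gen T n g" "y \<in> skew_code_gen T n g"
  shows "word_add x y \<in> skew_code_gen T n g"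
proof -
  obtain r a c r' a' c' where
    x: "x = map (coeff r) [0..<n]" "degree r < n" "r = skew_mult T a g + skew_mult T c (xn1 n)" and
    y: "y = map (coeff r') [0..<n]" "degree r' < n" "r' = skew_mult T a' g + skew_mult T c' (xn1 n)"
    using assms unfolding skew_code_gen_def by blast
  have "map (coeff (r + r')) [0..<n] \<in> skew_code_gen T n g"
  proof (rule skew_code_genI)
    show "degree (r + r') < n" using x y degree_add_le_max[of r r'] by linarith
    show "r + r' = skew_mult T (a + a') g + skew_mult T (c + c') (xn1 n)"
      using x y by (simp add: skew_mult_add_left)
  qed
  moreover have "word_add x y = map (coeff (r + r')) [0..<n]"
    using x y by (intro nth_equalityI) auto
  ultimately show ?thesis by simp
qed

lemma (in ring_endo) skew_code_gen_scale:
  assumes "x \<in> skew_code_gen T n g"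
  shows "word_scale k x \<in> skew_code_gen T n g"
proof -
  obtain r a c where
    x: "x = map (coeff r) [0..<n]" "degree r < n" "r = skew_mult T a g + skew_mult T c (xn1 n)"
    using assms unfolding skew_code_gen_def by blast
  have "map (coeff (smult k r)) [0..<n] \<in> skew_code_gen T n g"
  proof (rule skew_code_genI)
    show "degree (smult k r) < n" using x degree_smult_le[of k r] by linarith
    show "smult k r = skew_mult T (smult k a) g + skew_mult T (smult k c) (xn1 n)"
      using x by (simp add: skew_mult_smult_left smult_add_right)
  qed
  moreover have "word_scale k x = map (coeff (smult k r)) [0..<n]"
    using x by (intro nth_equalityI) auto
  ultimately show ?thesis by simp
qed

lemma (in ring_endo) linear_code_skew_code_gen:
  assumes "n > 0"
  shows "linear_code n (skew_code_gen T n g)"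
proof -
  have "map (coeff 0) [0..<n] = replicate n 0" by (intro nth_equalityI) auto
  moreover have "map (coeff 0) [0..<n] \<in> skew_code_gen T n g"
    using skew_code_genI[of 0 n T 0 g 0] assms by simp
  ultimately have "replicate n 0 \<in> skew_code_gen T n g" by metis
  moreover have "skew_code_gen T n g \<subseteq> {x. length x = n}"
    unfolding skew_code_gen_def by auto
  ultimately show ?thesis
    unfolding linear_code_def using skew_code_gen_add skew_code_gen_scale by blast
qed

text \<open>For \<open>degree P < 2 n\<close>, the remainder of \<open>P\<close> modulo \<open>x\<^sup>n - 1\<close>.\<close>
definition cyclic_fold :: "nat \<Rightarrow> 'a::comm_ring_1 poly \<Rightarrow> 'a poly" where
  "cyclic_fold n P = poly_cutoff n P + poly_cutoff n (poly_shift n P)"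

lemma coeff_cyclic_fold:
  "coeff (cyclic_fold n P) k = (if k < n then coeff P k + coeff P (k + n) else 0)"
  by (simp add: cyclic_fold_def coeff_poly_cutoff coeff_poly_shift)

lemma degree_cyclic_fold_less: "n > 0 \<Longrightarrow> degree (cyclic_fold n P) < n"
  using degree_le[of "n - 1" "cyclic_fold n P"] by (force simp: coeff_cyclic_fold)

lemma (in ring_endo) cyclic_fold_decomp:
  assumes "degree P < 2 * n"
  shows "P = cyclic_fold n P + skew_mult T (poly_shift n P) (xn1 n)"
proof (rule poly_eqI)
  fix k
  have "k \<ge> n \<Longrightarrow> coeff P (k + n) = 0" using assms by (intro coeff_eq_0) linarith
  then show "coeff P k = coeff (cyclic_fold n P + skew_mult T (poly_shift n P) (xn1 n)) k"
    by (simp add: coeff_cyclic_fold coeff_skew_mult_xn1_right coeff_poly_shift)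
qed

lemma (in ring_endo) cyclic_fold_in_skew_code_gen:
  assumes "n > 0" "degree P < 2 * n" "P = skew_mult T a f + skew_mult T e (xn1 n)"
  shows "map (coeff (cyclic_fold n P)) [0..<n] \<in> skew_code_gen T n f"
proof (rule skew_code_genI[OF degree_cyclic_fold_less[OF assms(1)]])
  show "cyclic_fold n P = skew_mult T a f + skew_mult T (e - poly_shift n P) (xn1 n)"
    using cyclic_fold_decomp[OF assms(2)] assms(3)
    by (simp add: skew_mult_diff_left algebra_simps)
qed

lemma add_diff_mod_eq_if:
  fixes r t n :: nat
  assumes "r < n" "t < n"
  shows "(r + n - t) mod n = (if t \<le> r then r - t else r + n - t)"
  using assms by (auto simp: mod_if)

text \<open>The coefficient at \<open>r\<close> of the remainder of \<open>x\<^sup>t h\<close> modulo \<open>x\<^sup>n - 1\<close>, and of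
  \<open>x\<^sup>i\<close> times the reversal of \<open>h\<close>.\<close>
lemma coeff_wraparound:
  fixes h :: "'a::monoid_add poly"
  assumes "degree h < n" "r < n" "t < n"
  shows "(if t \<le> r then coeff h (r - t) else 0) + coeff h (r + n - t) = coeff h ((r + n - t) mod n)"
  using assms by (simp add: add_diff_mod_eq_if coeff_eq_0)

lemma coeff_reversed_wraparound:
  fixes h :: "'a::monoid_add poly"
  assumes "degree h = s" "s < n" "r < n" "t < n" "i = (r + n - s) mod n"
  shows "(if i \<le> t \<and> t - i \<le> s then coeff h (s - (t - i)) else 0) +
         (if i \<le> t + n \<and> t + n - i \<le> s then coeff h (s - (t + n - i)) else 0)
       = coeff h ((r + n - t) mod n)"
proof -
  have z: "coeff h k = 0" if "k > s" for k using that assms(1) coeff_eq_0 by blast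
  have i: "i = (if s \<le> r then r - s else r + n - s)"
    using assms by (auto simp: add_diff_mod_eq_if)
  consider "s \<le> r" "t \<le> r" | "s \<le> r" "r < t" | "r < s" "t \<le> r" | "r < s" "r < t"
    by linarith
  then show ?thesis
  proof cases
    case 1
    then show ?thesis using i assms(2-4) z[of "r - t"]
      by (cases "r - s \<le> t") (auto simp: add_diff_mod_eq_if)
  next
    case 2
    then show ?thesis using i assms(2-4) z[of "r + n - t"] by (auto simp: add_diff_mod_eq_if)
  next
    case 3
    then show ?thesis using i assms(2-4) by (auto simp: add_diff_mod_eq_if)
  next
    case 4
    then show ?thesis using i assms(2-4) z[of "r + n - t"]
      by (cases "r + n - s \<le> t") (auto simp: add_diff_mod_eq_if)
  qed
qed

text \<open>The rows of the twisted circulant matrix of \<open>h\<close>: \<open>w h \<equiv> 0\<close> modulo \<open>x\<^sup>n - 1\<close> says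
  exactly that \<open>w\<close> is orthogonal to all of them.\<close>
definition skew_circulant_row :: "('a::zero \<Rightarrow> 'a) \<Rightarrow> nat \<Rightarrow> 'a poly \<Rightarrow> nat \<Rightarrow> 'a list" where
  "skew_circulant_row T n h r = map (\<lambda>t. (T ^^ t) (coeff h ((r + n - t) mod n))) [0..<n]"

context ring_endo
begin

text \<open>The row is the remainder of \<open>x\<^sup>i h\<^sup>\<dagger>\<close> for a suitable shift \<open>i\<close>, hence a left multiple
  of \<open>f\<close> when \<open>h\<^sup>\<dagger>\<close> is.\<close>
lemma skew_circulant_row_in_skew_code_gen:
  assumes "n > 0" "T ^^ n = id" "degree h < n" "skew_dagger T h = skew_mult T c f" "r < n"
  shows "skew_circulant_row T n h r \<in> skew_code_gen T n f"
proof -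
  define s where "s = degree h"
  define i where "i = (r + n - s) mod n"
  define Q where "Q = skew_mult T (monom 1 i) (skew_dagger T h)"
  have "(T ^^ i) ((T ^^ (e - i)) a) = (T ^^ e) a" if "i \<le> e" for e a
    using that funpow_add[of i "e - i" T] by simp
  then have coeff_Q: "coeff Q e = (if i \<le> e \<and> e - i \<le> s then (T ^^ e) (coeff h (s - (e - i))) else 0)" for e
    by (auto simp: Q_def coeff_skew_mult_monom_left coeff_skew_dagger s_def)
  have "degree Q \<le> i + s" by (rule degree_le) (auto simp: coeff_Q)
  moreover have "i < n" using assms(1) by (simp add: i_def)
  ultimately have "degree Q < 2 * n" using assms(3) s_def by linarith
  moreover have "Q = skew_mult T (skew_mult T (monom 1 i) c) f + skew_mult T 0 (xn1 n)"
    by (simp add: Q_def assms(4) skew_mult_assoc)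
  ultimately have "map (coeff (cyclic_fold n Q)) [0..<n] \<in> skew_code_gen T n f"
    by (rule cyclic_fold_in_skew_code_gen[OF assms(1)])
  moreover have "map (coeff (cyclic_fold n Q)) [0..<n] = skew_circulant_row T n h r"
  proof (rule nth_equalityI)
    fix t assume "t < length (map (coeff (cyclic_fold n Q)) [0..<n])"
    then have t: "t < n" by simp
    have "(T ^^ (t + n)) a = (T ^^ t) a" for a
      using assms(2) by (simp add: funpow_add)
    then have "coeff (cyclic_fold n Q) t = (T ^^ t)
        ((if i \<le> t \<and> t - i \<le> s then coeff h (s - (t - i)) else 0) +
         (if i \<le> t + n \<and> t + n - i \<le> s then coeff h (s - (t + n - i)) else 0))"
      using t by (simp add: coeff_cyclic_fold coeff_Q funpow_hom_add)
    also have "\<dots> = (T ^^ t) (coeff h ((r + n - t) mod n))"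
      using coeff_reversed_wraparound[OF s_def[symmetric] _ assms(5) t i_def] assms(3) s_def by simp
    finally show "map (coeff (cyclic_fold n Q)) [0..<n] ! t = skew_circulant_row T n h r ! t"
      using t by (simp add: skew_circulant_row_def)
  qed (simp add: skew_circulant_row_def)
  ultimately show ?thesis by simp
qed

lemma coeff_skew_mult_Poly:
  assumes "length w = n"
  shows "coeff (skew_mult T (Poly w) h) k =
           (\<Sum>t<n. if t \<le> k then w ! t * (T ^^ t) (coeff h (k - t)) else 0)"
proof -
  have "coeff (skew_mult T (Poly w) h) k =
      (\<Sum>t\<in>{..k} \<inter> {..<n}. nth_default 0 w t * (T ^^ t) (coeff h (k - t)))"
    unfolding coeff_skew_mult coeff_Poly_eq
    using assms by (intro sum.mono_neutral_right) (auto simp: nth_default_def)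
  also have "\<dots> = (\<Sum>t<n. if t \<le> k then w ! t * (T ^^ t) (coeff h (k - t)) else 0)"
    using assms by (subst Int_commute, subst sum.inter_restrict) (auto simp: nth_default_nth intro!: sum.cong)
  finally show ?thesis .
qed

lemma coeff_cyclic_fold_skew_mult_Poly:
  assumes "degree h < n" "length w = n" "r < n"
  shows "coeff (cyclic_fold n (skew_mult T (Poly w) h)) r = word_dot (skew_circulant_row T n h r) w"
proof -
  have "coeff (cyclic_fold n (skew_mult T (Poly w) h)) r =
      (\<Sum>t<n. w ! t * (T ^^ t) ((if t \<le> r then coeff h (r - t) else 0) + coeff h (r + n - t)))"
    using assms by (auto simp: coeff_cyclic_fold coeff_skew_mult_Poly sum.distrib[symmetric]
        funpow_hom_add distrib_left intro!: sum.cong)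
  also have "\<dots> = (\<Sum>t<n. skew_circulant_row T n h r ! t * w ! t)"
    using assms by (intro sum.cong refl) (simp add: coeff_wraparound skew_circulant_row_def)
  also have "\<dots> = word_dot (skew_circulant_row T n h r) w"
    using assms by (simp add: word_dot_conv_sum skew_circulant_row_def)
  finally show ?thesis .
qed

text \<open>The coefficients of the remainder are inner products of \<open>w\<close> with twisted circulant rows
  of \<open>h\<close>, which are codewords.\<close>
lemma cyclic_fold_skew_mult_Poly_eq_0:
  assumes n: "n > 0" "T ^^ n = id" and "degree h < n" "skew_dagger T h = skew_mult T c f"
    and w: "length w = n" "w \<in> dual_code n (skew_code_gen T n f)"
  shows "cyclic_fold n (skew_mult T (Poly w) h) = 0"
proof (rule poly_eqI)
  fix r
  show "coeff (cyclic_fold n (skew_mult T (Poly w) h)) r = coeff 0 r"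
    using coeff_cyclic_fold_skew_mult_Poly[OF assms(3) w(1)]
      skew_circulant_row_in_skew_code_gen[OF n assms(3,4)] w(2)
    by (cases "r < n") (auto simp: coeff_cyclic_fold dual_code_def)
qed

end

lemma (in inj_ring_endo) skew_dagger_eq_left_multiple:
  assumes n: "n > 0" "T ^^ n = id" and "h \<noteq> 0"
    and fac: "xn1 n = skew_mult T h f"
    and dagger: "right_dvd T (xn1 n) (skew_mult T (skew_dagger T h) h)"
  obtains c where "skew_dagger T h = skew_mult T c f"
proof -
  from dagger obtain c where "skew_mult T (skew_dagger T h) h = skew_mult T c (xn1 n)"
    unfolding right_dvd_def by blast
  also have "\<dots> = skew_mult T (skew_mult T c f) h"
    by (simp add: xn1_factor_commute[OF n fac] skew_mult_assoc)
  finally show ?thesis using \<open>h \<noteq> 0\<close> that by (metis skew_mult_right_cancel)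
qed

context field_endo
begin

lemma skew_code_gen_const:
  assumes "n > 0" "degree f = 0" "f \<noteq> 0" "length w = n"
  shows "w \<in> skew_code_gen T n f"
proof -
  define a where "a = Poly (map (\<lambda>k. w ! k / (T ^^ k) (coeff f 0)) [0..<n])"
  have "coeff f j = 0" if "j > 0" for j
    using that assms(2) by (simp add: coeff_eq_0)
  then have "coeff (skew_mult T a f) k = (\<Sum>i\<in>{k}. coeff a i * (T ^^ i) (coeff f (k - i)))" for k
    unfolding coeff_skew_mult by (intro sum.mono_neutral_right) auto
  then have coeff_af: "coeff (skew_mult T a f) k = coeff a k * (T ^^ k) (coeff f 0)" for k
    by simp
  have "coeff f 0 \<noteq> 0" using assms(2,3) leading_coeff_0_iff[of f] by simp
  then have "skew_mult T a f = Poly w"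
    using assms(4) by (intro poly_eqI) (simp only: coeff_af, simp add: a_def nth_default_def)
  then have "map (coeff (Poly w)) [0..<n] \<in> skew_code_gen T n f"
    using degree_Poly_less[OF assms(4,1)] by (intro skew_code_genI[of _ _ _ a _ 0]) simp_all
  then show ?thesis by (simp only: map_coeff_Poly[OF assms(4)])
qed

text \<open>\<open>w \<perp> C\<close> gives \<open>w h \<equiv> 0\<close> modulo \<open>x\<^sup>n - 1 = f h\<close>, and cancelling \<open>h\<close> leaves \<open>w \<in> C\<close>.\<close>
lemma dual_skew_code_gen_subset:
  assumes n: "n > 0" "T ^^ n = id"
    and fac: "xn1 n = skew_mult T h f"
    and dagger: "right_dvd T (xn1 n) (skew_mult T (skew_dagger T h) h)"
  shows "dual_code n (skew_code_gen T n f) \<subseteq> skew_code_gen T n f"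
proof
  fix w assume w: "w \<in> dual_code n (skew_code_gen T n f)"
  then have len: "length w = n" by (simp add: dual_code_def)
  have "h \<noteq> 0" "f \<noteq> 0" using fac xn1_nonzero[OF n(1), where 'a='a] by auto
  then have deg_sum: "degree h + degree f = n"
    using fac degree_skew_mult degree_xn1[OF n(1)] by metis
  show "w \<in> skew_code_gen T n f"
  proof (cases "degree f = 0")
    case True
    show ?thesis by (rule skew_code_gen_const[OF n(1) True \<open>f \<noteq> 0\<close> len])
  next
    case False
    then have deg_h: "degree h < n" using deg_sum by linarith
    obtain c where dag: "skew_dagger T h = skew_mult T c f"
      using skew_dagger_eq_left_multiple[OF n \<open>h \<noteq> 0\<close> fac dagger] .
    define P where "P = skew_mult T (Poly w) h"
    have "degree P \<le> (n - 1) + (n - 1)"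
      unfolding P_def using degree_skew_mult_le[of "Poly w" h] degree_Poly_less[OF len n(1)] deg_h
      by linarith
    then have "degree P < 2 * n" using n(1) by linarith
    from cyclic_fold_decomp[OF this] have "P = skew_mult T (skew_mult T (poly_shift n P) f) h"
      using cyclic_fold_skew_mult_Poly_eq_0[OF n deg_h dag len w]
      by (simp add: P_def xn1_factor_commute[OF n fac] skew_mult_assoc)
    then have "Poly w = skew_mult T (poly_shift n P) f + skew_mult T 0 (xn1 n)"
      unfolding P_def using \<open>h \<noteq> 0\<close> by (simp add: skew_mult_right_cancel)
    from skew_code_genI[OF degree_Poly_less[OF len n(1)] this]
    show ?thesis by (simp only: map_coeff_Poly[OF len])
  qed
qed

end

section \<open>The Gray map\<close>

text \<open>The Gray image \<open>(a, b) M\<close> of \<open>\<xi>\<^sub>1 a + \<xi>\<^sub>2 b\<close>, and of a word \<open>\<xi>\<^sub>1 c\<^sub>1 + \<xi>\<^sub>2 c\<^sub>2\<close>.\<close>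
definition gray_coords :: "'a::comm_ring_1 ^2^2 \<Rightarrow> 'a \<Rightarrow> 'a \<Rightarrow> 'a list" where
  "gray_coords M a b = (let v = vector [a, b] v* M in [v $ 1, v $ 2])"

definition gray_coords_list :: "'a::comm_ring_1 ^2^2 \<Rightarrow> 'a list \<Rightarrow> 'a list \<Rightarrow> 'a list" where
  "gray_coords_list M c1 c2 = concat (map2 (gray_coords M) c1 c2)"

lemma gray_coords_eq: "gray_coords M a b = [a * M$1$1 + b * M$2$1, a * M$1$2 + b * M$2$2]"
  by (simp add: gray_coords_def vector_matrix_mult_def sum_2)

lemma length_gray_coords [simp]: "length (gray_coords M a b) = 2"
  by (simp add: gray_coords_eq)

lemma gray_coords_add: "word_add (gray_coords M a b) (gray_coords M a' b') = gray_coords M (a + a') (b + b')"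
  by (simp add: gray_coords_eq algebra_simps)

lemma gray_coords_scale: "word_scale k (gray_coords M a b) = gray_coords M (k * a) (k * b)"
  by (simp add: gray_coords_eq algebra_simps)

lemma gray_coords_0 [simp]: "gray_coords M 0 0 = [0, 0]"
  by (simp add: gray_coords_eq)

lemma word_dot_gray_coords:
  assumes "M ** transpose M = mat \<gamma>"
  shows "word_dot (gray_coords M a b) (gray_coords M c d) = \<gamma> * (a * c + b * d)"
proof -
  have entry: "(M ** transpose M) $ i $ j = (mat \<gamma> :: 'a^2^2) $ i $ j" for i j
    using assms by simp
  have "M$1$1 * M$1$1 + M$1$2 * M$1$2 = \<gamma>" "M$2$1 * M$2$1 + M$2$2 * M$2$2 = \<gamma>"
    "M$1$1 * M$2$1 + M$1$2 * M$2$2 = 0"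
    using entry[of 1 1] entry[of 2 2] entry[of 1 2]
    by (simp_all add: matrix_matrix_mult_def transpose_def mat_def sum_2)
  moreover have "word_dot (gray_coords M a b) (gray_coords M c d) =
     a * c * (M$1$1 * M$1$1 + M$1$2 * M$1$2) + b * d * (M$2$1 * M$2$1 + M$2$2 * M$2$2)
     + (a * d + b * c) * (M$1$1 * M$2$1 + M$1$2 * M$2$2)"
    by (simp add: gray_coords_eq algebra_simps)
  ultimately show ?thesis by (simp add: algebra_simps)
qed

lemma gray_coords_surj:
  assumes "invertible M"
  obtains a b where "gray_coords M a b = [u, v]"
proof -
  obtain N where N: "N ** M = mat 1" using assms unfolding invertible_def by blast
  define x where "x = vector [u, v] v* N"
  have "vector [x $ 1, x $ 2] = x" by (simp add: vec_eq_iff forall_2)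
  then have "gray_coords M (x $ 1) (x $ 2) = [u, v]"
    by (simp add: gray_coords_def x_def vector_matrix_mul_assoc N)
  then show ?thesis by (rule that)
qed

lemma gray_coords_list_Nil [simp]: "gray_coords_list M [] c2 = []" "gray_coords_list M c1 [] = []"
  by (simp_all add: gray_coords_list_def)

lemma gray_coords_list_Cons [simp]:
  "gray_coords_list M (a # c1) (b # c2) = gray_coords M a b @ gray_coords_list M c1 c2"
  by (simp add: gray_coords_list_def)

lemma length_gray_coords_list:
  "length c1 = length c2 \<Longrightarrow> length (gray_coords_list M c1 c2) = 2 * length c1"
  by (induction c1 c2 rule: list_induct2) simp_all

lemma gray_coords_list_add:
  "length c1 = length c2 \<Longrightarrow> length c1' = length c1 \<Longrightarrow> length c2' = length c1 \<Longrightarrow>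
   word_add (gray_coords_list M c1 c2) (gray_coords_list M c1' c2') =
     gray_coords_list M (word_add c1 c1') (word_add c2 c2')"
proof (induction c1 c2 arbitrary: c1' c2' rule: list_induct2)
  case (Cons a c1 b c2)
  then show ?case
    by (cases c1'; cases c2') (simp_all add: zip_append gray_coords_add[symmetric])
qed simp

lemma gray_coords_list_scale:
  "word_scale k (gray_coords_list M c1 c2) = gray_coords_list M (word_scale k c1) (word_scale k c2)"
  by (induction c1 c2 rule: list_induct2') (simp_all add: gray_coords_scale)

lemma gray_coords_list_replicate_0 [simp]:
  "gray_coords_list M (replicate k 0) (replicate k 0) = replicate (2 * k) 0"
  by (induction k) simp_all

lemma word_dot_gray_coords_list:
  assumes "M ** transpose M = mat \<gamma>"
    and "length c1 = length c2" "length d1 = length c1" "length d2 = length c1"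
  shows "word_dot (gray_coords_list M c1 c2) (gray_coords_list M d1 d2) =
           \<gamma> * (word_dot c1 d1 + word_dot c2 d2)"
  using assms(2-4)
proof (induction c1 c2 arbitrary: d1 d2 rule: list_induct2)
  case (Cons a c1 b c2)
  then show ?case
    by (cases d1; cases d2) (simp_all add: word_dot_append word_dot_gray_coords[OF assms(1)] algebra_simps)
qed simp

lemma gray_coords_list_surj:
  assumes "invertible M"
  shows "length w = 2 * k \<Longrightarrow> \<exists>d1 d2. length d1 = k \<and> length d2 = k \<and> gray_coords_list M d1 d2 = w"
proof (induction k arbitrary: w)
  case (Suc k)
  then obtain u v w' where w: "w = u # v # w'" and "length w' = 2 * k"
    by (cases w; cases "tl w") auto
  then obtain d1 d2 where "length d1 = k" "length d2 = k" "gray_coords_list M d1 d2 = w'"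
    using Suc.IH by blast
  moreover obtain a b where "gray_coords M a b = [u, v]"
    using gray_coords_surj[OF assms] .
  ultimately show ?case
    using w by (intro exI[of _ "a # d1"] exI[of _ "b # d2"]) simp
qed simp

lemma gray_xi_sum:
  "gray M (x, map2 (\<lambda>a b. R_add (R_mult xi1 (R_of a)) (R_mult xi2 (R_of b))) c1 c2) =
     x @ gray_coords_list M c1 c2"
proof -
  have "gray_pair M (R_add (R_mult xi1 (R_of a)) (R_mult xi2 (R_of b))) = gray_coords M a b" for a b
    by (simp add: gray_pair_def gray_coords_def R_comp1_def R_comp2_def R_add_def R_mult_def
        xi1_def xi2_def R_of_def)
  then show ?thesis
    by (simp add: gray_def gray_coords_list_def map_map case_prod_beta' cong: map_cong)
qed

definition gray_product :: "'a::comm_ring_1 ^2^2 \<Rightarrow> 'a list set \<Rightarrow> 'a list set \<Rightarrow> 'a list set \<Rightarrow> 'a list set" where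
  "gray_product M A B1 B2 =
     {x @ gray_coords_list M c1 c2 | x c1 c2. x \<in> A \<and> c1 \<in> B1 \<and> c2 \<in> B2 \<and> length c1 = length c2}"

lemma gray_image_code_tensor: "gray M ` code_tensor A (xi_sum B1 B2) = gray_product M A B1 B2"
  unfolding gray_product_def code_tensor_def xi_sum_def
  by (auto simp: gray_xi_sum simp flip: gray_xi_sum intro!: image_eqI)

lemma gray_productI:
  "x \<in> A \<Longrightarrow> c1 \<in> B1 \<Longrightarrow> c2 \<in> B2 \<Longrightarrow> length c1 = length c2 \<Longrightarrow>
     x @ gray_coords_list M c1 c2 \<in> gray_product M A B1 B2"
  unfolding gray_product_def by blast

lemma linear_code_gray_product:
  assumes A: "linear_code \<alpha> A" and B1: "linear_code \<beta> B1" and B2: "linear_code \<beta> B2"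
  shows "linear_code (\<alpha> + 2 * \<beta>) (gray_product M A B1 B2)"
  unfolding linear_code_def
proof (intro conjI ballI allI)
  show "gray_product M A B1 B2 \<subseteq> {x. length x = \<alpha> + 2 * \<beta>}"
    using A B1 B2 by (auto simp: gray_product_def linear_code_length length_gray_coords_list)
  show "replicate (\<alpha> + 2 * \<beta>) 0 \<in> gray_product M A B1 B2"
    using gray_productI[OF linear_code_zero[OF A] linear_code_zero[OF B1] linear_code_zero[OF B2]]
    by (simp add: replicate_add)
next
  fix u v assume "u \<in> gray_product M A B1 B2" "v \<in> gray_product M A B1 B2"
  then obtain x c1 c2 x' c1' c2' where
    u: "u = x @ gray_coords_list M c1 c2" "x \<in> A" "c1 \<in> B1" "c2 \<in> B2" and
    v: "v = x' @ gray_coords_list M c1' c2'" "x' \<in> A" "c1' \<in> B1" "c2' \<in> B2"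
    unfolding gray_product_def by blast
  have "word_add u v = word_add x x' @ gray_coords_list M (word_add c1 c1') (word_add c2 c2')"
    using u v A B1 B2 by (simp add: zip_append linear_code_length gray_coords_list_add)
  then show "word_add u v \<in> gray_product M A B1 B2"
    using u v A B1 B2 by (simp add: gray_productI linear_code_add linear_code_length)
next
  fix k u assume "u \<in> gray_product M A B1 B2"
  then obtain x c1 c2 where
    u: "u = x @ gray_coords_list M c1 c2" "x \<in> A" "c1 \<in> B1" "c2 \<in> B2"
    unfolding gray_product_def by blast
  then show "word_scale k u \<in> gray_product M A B1 B2"
    using A B1 B2 by (simp add: gray_coords_list_scale gray_productI linear_code_scale linear_code_length)
qed

lemma word_dot_gray_product:
  assumes "M ** transpose M = mat \<gamma>" "length x = length y"
    and "length c1 = length c2" "length d1 = length c1" "length d2 = length c1"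
  shows "word_dot (x @ gray_coords_list M c1 c2) (y @ gray_coords_list M d1 d2) =
           word_dot x y + \<gamma> * (word_dot c1 d1 + word_dot c2 d2)"
  using assms by (simp add: word_dot_append word_dot_gray_coords_list)

text \<open>Testing \<open>w = w\<^sub>0 @ Gray(\<xi>\<^sub>1 d\<^sub>1 + \<xi>\<^sub>2 d\<^sub>2)\<close> against codewords with two of the three
  components zero shows \<open>w\<^sub>0 \<perp> A\<close>, \<open>d\<^sub>1 \<perp> B\<^sub>1\<close> and \<open>d\<^sub>2 \<perp> B\<^sub>2\<close>; here \<open>\<gamma> \<noteq> 0\<close> is used.\<close>
lemma dual_code_gray_product_subset:
  fixes M :: "'a::idom ^2^2"
  assumes A: "linear_code \<alpha> A" "dual_code \<alpha> A \<subseteq> A"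
    and B1: "linear_code \<beta> B1" "dual_code \<beta> B1 \<subseteq> B1"
    and B2: "linear_code \<beta> B2" "dual_code \<beta> B2 \<subseteq> B2"
    and M: "M ** transpose M = mat \<gamma>" "\<gamma> \<noteq> 0" "invertible M"
  shows "dual_code (\<alpha> + 2 * \<beta>) (gray_product M A B1 B2) \<subseteq> gray_product M A B1 B2"
proof
  fix w assume w: "w \<in> dual_code (\<alpha> + 2 * \<beta>) (gray_product M A B1 B2)"
  define w0 where "w0 = take \<alpha> w"
  have len: "length w0 = \<alpha>" "length (drop \<alpha> w) = 2 * \<beta>"
    using w by (simp_all add: w0_def dual_code_def)
  obtain d1 d2 where d: "length d1 = \<beta>" "length d2 = \<beta>" "gray_coords_list M d1 d2 = drop \<alpha> w"
    using gray_coords_list_surj[OF M(3) len(2)] by blast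
  have w_eq: "w = w0 @ gray_coords_list M d1 d2" by (simp add: w0_def d(3))
  have orth: "word_dot x w0 + \<gamma> * (word_dot c1 d1 + word_dot c2 d2) = 0"
    if "x \<in> A" "c1 \<in> B1" "c2 \<in> B2" for x c1 c2
  proof -
    have "x @ gray_coords_list M c1 c2 \<in> gray_product M A B1 B2"
      using that B1 B2 by (simp add: gray_productI linear_code_length)
    then have "word_dot (x @ gray_coords_list M c1 c2) w = 0"
      using w by (simp add: dual_code_def)
    then show ?thesis
      using that A B1 B2 len d(1,2) by (simp add: w_eq word_dot_gray_product[OF M(1)] linear_code_length)
  qed
  have zero: "replicate \<alpha> 0 \<in> A" "replicate \<beta> 0 \<in> B1" "replicate \<beta> 0 \<in> B2"
    using A B1 B2 by (simp_all add: linear_code_zero)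
  have "word_dot x w0 = 0" if "x \<in> A" for x
    using orth[OF that zero(2,3)] by simp
  moreover have "word_dot c d1 = 0" if "c \<in> B1" for c
    using orth[OF zero(1) that zero(3)] M(2) by simp
  moreover have "word_dot c d2 = 0" if "c \<in> B2" for c
    using orth[OF zero(1,2) that] M(2) by simp
  ultimately have "w0 \<in> dual_code \<alpha> A" "d1 \<in> dual_code \<beta> B1" "d2 \<in> dual_code \<beta> B2"
    using len d(1,2) by (simp_all add: dual_code_def)
  then show "w \<in> gray_product M A B1 B2"
    using A B1 B2 d(1,2) by (auto simp: w_eq intro!: gray_productI)
qed

section \<open>Finite fields and their additive character\<close>

text \<open>The library's \<open>finite_field_power_card_eq_same\<close> needs the sort \<open>finite_field\<close>, which a
  type of sort \<open>{field, finite}\<close> does not have.\<close>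
lemma power_card_minus_one:
  fixes x :: "'a::{field,finite}"
  assumes "x \<noteq> 0"
  shows "x ^ (CARD('a) - 1) = 1"
proof -
  have "(\<Prod>y\<in>UNIV - {0}. x * y) = (\<Prod>y\<in>UNIV - {0}. y)"
    by (rule prod.reindex_bij_witness[of _ "\<lambda>y. y / x" "\<lambda>y. x * y"]) (use assms in auto)
  moreover have "(\<Prod>y\<in>UNIV - {0}. x * y) = x ^ (CARD('a) - 1) * (\<Prod>y\<in>UNIV - {0}. y)"
    by (simp add: prod.distrib card_Diff_singleton)
  moreover have "(\<Prod>y\<in>UNIV - {0::'a}. y) \<noteq> 0" by simp
  ultimately show ?thesis by simp
qed

lemma power_card_eq_self: "x ^ CARD('a) = (x :: 'a::{field,finite})"
proof (cases "x = 0")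
  case False
  have "x ^ CARD('a) = x * x ^ (CARD('a) - 1)"
    using finite_UNIV_card_ge_0[where 'a='a] by (simp flip: power_Suc)
  then show ?thesis using power_card_minus_one[OF False] by simp
qed simp

lemma power_card_power_eq_self: "x ^ (CARD('a) ^ k) = (x :: 'a::{field,finite})"
  by (induction k) (simp_all add: power_card_eq_self power_mult)

lemma one_less_card_field: "1 < CARD('a::{field,finite})"
  using card_mono[of UNIV "{0, 1 :: 'a}"] by simp

lemma CHAR_eq_prime:
  assumes "prime p" "of_nat p = (0 :: 'a::{semiring_1,zero_neq_one})"
  shows "CHAR('a) = p"
  using assms CHAR_not_1[where 'a='a] by (auto simp: of_nat_eq_0_iff_char_dvd prime_nat_iff)

lemma funpow_eq_id_if_aut_order_dvd:
  assumes "T ^^ k = id" "k > 0" "aut_order T dvd n"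
  shows "T ^^ n = id"
proof -
  have "aut_order T > 0 \<and> T ^^ aut_order T = id"
    unfolding aut_order_def by (rule LeastI[of _ k]) (use assms in simp)
  moreover obtain c where "n = aut_order T * c" using assms(3) by blast
  ultimately show ?thesis by (simp add: funpow_mult[symmetric])
qed

lemma funpow_R_theta: "R_theta T ^^ k = R_theta (T ^^ k)"
  by (induction k) (simp_all add: fun_eq_iff R_theta_def)

lemma funpow_eq_id_if_aut_order_R_theta_dvd:
  assumes "T ^^ k = id" "k > 0" "aut_order (R_theta T) dvd n"
  shows "T ^^ n = id"
proof -
  have "R_theta T ^^ k = id" using assms(1) by (simp add: funpow_R_theta fun_eq_iff R_theta_def)
  then have "R_theta (T ^^ n) = id"
    using funpow_eq_id_if_aut_order_dvd[OF _ assms(2,3)] by (simp add: funpow_R_theta)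
  then show ?thesis by (auto simp: fun_eq_iff R_theta_def)
qed

context
  fixes p m :: nat
  assumes CHAR_eq: "CHAR('a::{field,finite}) = p" and CARD_eq: "CARD('a) = p ^ m"
begin

lemma prime_CHAR_field: "prime p"
proof -
  have "prime CHAR('a)" by (rule prime_CHAR_semidom, rule finite_imp_CHAR_pos) simp
  then show ?thesis by (simp add: CHAR_eq)
qed

lemma CARD_exponent_pos: "m > 0"
proof -
  have "CARD('a) \<ge> card {0, 1 :: 'a}" by (intro card_mono) simp_all
  then show ?thesis using CARD_eq by (cases m) simp_all
qed

lemma frobenius_add: "(x + y) ^ (p ^ k) = x ^ (p ^ k) + (y :: 'a) ^ (p ^ k)"
  using prime_CHAR_field CHAR_eq by (intro freshmans_dream') simp_all

lemma frobenius_sum: "sum f A ^ (p ^ k) = (\<Sum>x\<in>A. (f x :: 'a) ^ (p ^ k))"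
  using prime_CHAR_field CHAR_eq by (intro freshmans_dream_sum') simp_all

lemma field_endo_frobenius: "field_endo (\<lambda>a :: 'a. a ^ (p ^ i))"
  by unfold_locales (simp_all add: frobenius_add power_mult_distrib)

lemma funpow_frobenius: "(\<lambda>a :: 'a. a ^ (p ^ i)) ^^ k = (\<lambda>a. a ^ (p ^ (i * k)))"
  by (induction k) (simp_all add: fun_eq_iff power_mult[symmetric] power_add[symmetric] mult.commute)

lemma frobenius_funpow_exponent: "(\<lambda>a :: 'a. a ^ (p ^ i)) ^^ m = id"
proof -
  have "p ^ (i * m) = CARD('a) ^ i" by (simp add: CARD_eq power_mult[symmetric] mult.commute)
  then show ?thesis by (simp add: funpow_frobenius power_card_power_eq_self fun_eq_iff)
qed

lemma of_nat_power_CHAR: "(of_nat t :: 'a) ^ p = of_nat t"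
proof (induction t)
  case (Suc t)
  then show ?case using frobenius_add[of "of_nat t" 1 1] by (simp add: add.commute)
qed (use prime_CHAR_field prime_gt_0_nat in auto)

lemma of_nat_mod_CHAR: "(of_nat (a mod p) :: 'a) = of_nat a"
proof -
  have "(of_nat a :: 'a) = of_nat (a mod p) + of_nat (p * (a div p))"
    by (simp only: of_nat_add[symmetric] mod_mult_div_eq)
  moreover have "(of_nat (p * (a div p)) :: 'a) = 0" by (simp flip: CHAR_eq)
  ultimately show ?thesis by simp
qed

lemma inj_on_of_nat_CHAR: "inj_on (of_nat :: nat \<Rightarrow> 'a) {..<p}"
proof (rule inj_onI, rule ccontr)
  have *: "a = b" if "a < p" "b < p" "a \<le> b" "(of_nat a :: 'a) = of_nat b" for a b
  proof -
    have "(of_nat (b - a) :: 'a) = 0" using that by (simp add: of_nat_diff)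
    then have "p dvd b - a" by (simp add: of_nat_eq_0_iff_char_dvd CHAR_eq)
    then show ?thesis using that by (auto dest: dvd_imp_le)
  qed
  fix a b assume "a \<in> {..<p}" "b \<in> {..<p}" "(of_nat a :: 'a) = of_nat b" "a \<noteq> b"
  then show False using *[of a b] *[of b a] by (cases "a \<le> b") auto
qed

text \<open>The prime field supplies \<open>p\<close> roots of \<open>y\<^sup>p - y\<close>, which cannot have more.\<close>
lemma fixed_points_power_CHAR: "{y :: 'a. y ^ p = y} = of_nat ` {..<p}"
proof (rule card_seteq[symmetric])
  define P :: "'a poly" where "P = monom 1 p - [:0, 1:]"
  have "p \<ge> 2" using prime_CHAR_field prime_ge_2_nat by blast
  then have "degree P = p"
    unfolding P_def diff_conv_add_uminus
    by (subst degree_add_eq_left) (simp_all add: degree_monom_eq)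
  then have "card {y. poly P y = 0} \<le> p"
    using card_poly_roots_bound[of P] \<open>p \<ge> 2\<close> by fastforce
  moreover have "{y. poly P y = 0} = {y :: 'a. y ^ p = y}"
    by (simp add: P_def poly_monom)
  ultimately show "card {y :: 'a. y ^ p = y} \<le> card (of_nat ` {..<p} :: 'a set)"
    by (simp add: card_image[OF inj_on_of_nat_CHAR])
qed (auto simp: of_nat_power_CHAR)

lemma abs_trace_add: "abs_trace p m (z + w) = abs_trace p m z + abs_trace p m (w :: 'a)"
  by (simp add: abs_trace_def frobenius_add sum.distrib)

lemma abs_trace_power_CHAR: "abs_trace p m z ^ p = abs_trace p m (z :: 'a)"
proof -
  have "abs_trace p m z ^ p = (\<Sum>j<m. (z ^ (p ^ j)) ^ (p ^ 1))"
    using frobenius_sum[of "\<lambda>j. z ^ (p ^ j)" "{..<m}" 1] by (simp add: abs_trace_def)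
  also have "\<dots> = (\<Sum>j<m. z ^ (p ^ Suc j))"
    by (simp add: power_mult[symmetric] mult.commute)
  also have "\<dots> = (\<Sum>j<Suc m. z ^ (p ^ j)) - z ^ (p ^ 0)"
    by (simp only: sum.lessThan_Suc_shift add_diff_cancel_left')
  also have "\<dots> = abs_trace p m z"
    using power_card_eq_self[of z] by (simp add: abs_trace_def CARD_eq)
  finally show ?thesis .
qed

lemma abs_trace_in_prime_field: "\<exists>t<p. of_nat t = abs_trace p m (z :: 'a)"
proof -
  have "abs_trace p m z \<in> {y. y ^ p = y}" using abs_trace_power_CHAR by simp
  then show ?thesis unfolding fixed_points_power_CHAR by auto
qed

lemma add_char_eq_power:
  assumes "t < p" "of_nat t = abs_trace p m (z :: 'a)"
  shows "add_char p m z = cis (2 * pi / real p) ^ t"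
proof -
  have "(THE t. t < p \<and> of_nat t = abs_trace p m z) = t"
  proof (rule the_equality)
    fix t' assume t': "t' < p \<and> of_nat t' = abs_trace p m z"
    show "t' = t"
    proof (rule inj_onD[OF inj_on_of_nat_CHAR])
      show "of_nat t' = (of_nat t :: 'a)" using t' assms(2) by simp
    qed (use t' assms(1) in auto)
  qed (use assms in simp)
  then show ?thesis unfolding Complex.DeMoivre by (simp add: add_char_def mult_ac)
qed

lemma add_char_0: "add_char p m (0 :: 'a) = 1"
  using add_char_eq_power[of 0 0] prime_CHAR_field prime_gt_0_nat
  by (simp add: abs_trace_def zero_power)

text \<open>\<open>\<omega> = e\<^sup>2\<^sup>\<pi>\<^sup>i\<^sup>/\<^sup>p\<close> is a \<open>p\<close>-th root of unity, and the trace is additive.\<close>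
lemma add_char_add: "add_char p m (z + w) = add_char p m z * add_char p m (w :: 'a)"
proof -
  obtain t1 t2 where t: "t1 < p" "of_nat t1 = abs_trace p m z" "t2 < p" "of_nat t2 = abs_trace p m w"
    using abs_trace_in_prime_field by metis
  have "p > 0" using prime_CHAR_field prime_gt_0_nat by blast
  have root: "cis (2 * pi / real p) ^ p = 1"
    using \<open>p > 0\<close> unfolding Complex.DeMoivre by simp
  have "cis (2 * pi / real p) ^ (t1 + t2) =
      cis (2 * pi / real p) ^ ((t1 + t2) mod p) * (cis (2 * pi / real p) ^ p) ^ ((t1 + t2) div p)"
    by (simp only: power_mult[symmetric] power_add[symmetric] mod_mult_div_eq)
  then have mod_p: "cis (2 * pi / real p) ^ ((t1 + t2) mod p) = cis (2 * pi / real p) ^ (t1 + t2)"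
    by (simp add: root)
  have "add_char p m (z + w) = cis (2 * pi / real p) ^ ((t1 + t2) mod p)"
    using t \<open>p > 0\<close> by (intro add_char_eq_power) (simp_all add: of_nat_mod_CHAR abs_trace_add)
  also have "\<dots> = cis (2 * pi / real p) ^ t1 * cis (2 * pi / real p) ^ t2"
    by (simp only: mod_p power_add)
  also have "\<dots> = add_char p m z * add_char p m w"
    by (simp add: add_char_eq_power[OF t(1,2)] add_char_eq_power[OF t(3,4)])
  finally show ?thesis .
qed

text \<open>The trace is a polynomial function of degree \<open>p\<^sup>m\<^sup>-\<^sup>1 < q\<close>, so it has a non-root.\<close>
lemma abs_trace_nonzero: "\<exists>z :: 'a. abs_trace p m z \<noteq> 0"
proof (rule ccontr)
  assume "\<not> (\<exists>z :: 'a. abs_trace p m z \<noteq> 0)"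
  define P :: "'a poly" where "P = (\<Sum>j<m. monom 1 (p ^ j))"
  have "p \<ge> 2" using prime_CHAR_field prime_ge_2_nat by blast
  have coeff_P: "coeff P k = (\<Sum>j<m. if p ^ j = k then 1 else 0)" for k
    by (simp add: P_def coeff_sum coeff_monom)
  have "coeff P (p ^ (m - 1)) = (\<Sum>j\<in>{m - 1}. 1)"
    unfolding coeff_P using CARD_exponent_pos \<open>p \<ge> 2\<close>
    by (intro sum.mono_neutral_cong_right) (auto simp: power_inject_exp)
  then have "P \<noteq> 0" by auto
  have "degree P \<le> p ^ (m - 1)"
  proof (rule degree_le, intro allI impI)
    fix k assume "p ^ (m - 1) < k"
    moreover have "p ^ j \<le> p ^ (m - 1)" if "j < m" for j
      using that \<open>p \<ge> 2\<close> by (intro power_increasing) auto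
    ultimately show "coeff P k = 0" unfolding coeff_P by (intro sum.neutral) force
  qed
  moreover have "{z. poly P z = 0} = UNIV"
    using \<open>\<not> (\<exists>z. abs_trace p m z \<noteq> 0)\<close> by (auto simp: P_def poly_sum poly_monom abs_trace_def)
  ultimately have "CARD('a) \<le> p ^ (m - 1)"
    using card_poly_roots_bound[OF \<open>P \<noteq> 0\<close>] by simp
  moreover have "p ^ (m - 1) < p ^ m"
    using \<open>p \<ge> 2\<close> CARD_exponent_pos by (intro power_strict_increasing) auto
  ultimately show False using CARD_eq by simp
qed

lemma add_char_nontrivial: "\<exists>z :: 'a. add_char p m z \<noteq> 1"
proof -
  obtain z :: 'a where "abs_trace p m z \<noteq> 0" using abs_trace_nonzero by blast
  moreover obtain t where t: "t < p" "of_nat t = abs_trace p m z"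
    using abs_trace_in_prime_field by blast
  ultimately have "0 < t" by (auto intro: Nat.gr0I)
  have "cis (2 * pi / real p) ^ t \<noteq> 1"
  proof
    assume "cis (2 * pi / real p) ^ t = 1"
    then have "cos (real t * (2 * pi / real p)) = 1"
      unfolding Complex.DeMoivre by (simp add: complex_eq_iff)
    then obtain k :: int where "real t * (2 * pi / real p) = of_int k * (2 * pi)"
      by (auto simp: cos_one_2pi_int)
    then have "real t = of_int k * real p" using t(1) by (simp add: field_simps)
    then have "of_int k = real t / real p" using t(1) by simp
    moreover have "0 < real t / real p" "real t / real p < 1" using \<open>0 < t\<close> t(1) by simp_all
    ultimately have "0 < k" "k < 1" by simp_all
    then show False by simp
  qed
  then show ?thesis using add_char_eq_power[OF t] by (intro exI[of _ z]) simp
qed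

end

lemma sum_eq_0_if_bij_betw_scaled:
  fixes F :: "'b \<Rightarrow> 'a::idom"
  assumes "bij_betw g S S" "\<And>y. y \<in> S \<Longrightarrow> F (g y) = c * F y" "c \<noteq> 1"
  shows "sum F S = 0"
proof -
  have "sum F S = (\<Sum>y\<in>S. F (g y))" by (rule sum.reindex_bij_betw[OF assms(1), symmetric])
  also have "\<dots> = c * sum F S" using assms(2) by (simp add: sum_distrib_left)
  finally have "(1 - c) * sum F S = 0" by (simp add: algebra_simps)
  then show ?thesis using assms(3) by simp
qed

lemma dual_code_words: "dual_code n {x. length x = n} = {replicate n (0 :: 'a::comm_ring_1)}"
proof (intro equalityI subsetI)
  fix s assume s: "s \<in> dual_code n {x. length x = n}"
  show "s \<in> {replicate n 0}"
  proof (simp, rule nth_equalityI)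
    fix k assume "k < length s"
    moreover have "length s = n" using s by (simp add: dual_code_def)
    moreover have "word_dot ((replicate n 0)[k := 1]) s = 0"
      using s by (simp add: dual_code_def)
    ultimately show "s ! k = replicate n 0 ! k"
      by (simp add: word_dot_conv_sum nth_list_update if_distrib[of "\<lambda>x. x * _"] cong: if_cong)
  qed (use s in \<open>simp add: dual_code_def\<close>)
qed (simp add: dual_code_def)

locale nontrivial_add_char =
  fixes \<psi> :: "'a::{field,finite} \<Rightarrow> complex"
  assumes char_add: "\<psi> (a + b) = \<psi> a * \<psi> b"
    and char_0: "\<psi> 0 = 1"
    and char_nontrivial: "\<exists>z. \<psi> z \<noteq> 1"
begin

text \<open>Orthogonality of characters: translating by a codeword \<open>t\<close> with \<open>\<psi>(b \<cdot> t) \<noteq> 1\<close>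
  multiplies the sum by \<open>\<psi>(b \<cdot> t)\<close>.\<close>
lemma sum_char_word_dot:
  assumes V: "linear_code n V" and b: "length b = n"
  shows "(\<Sum>s\<in>V. \<psi> (word_dot b s)) = (if b \<in> dual_code n V then of_nat (card V) else 0)"
proof (cases "b \<in> dual_code n V")
  case True
  then have "word_dot b s = 0" if "s \<in> V" for s
    using that by (auto simp: dual_code_def word_dot_commute)
  then show ?thesis using True by (simp add: char_0)
next
  case False
  then obtain s0 where s0: "s0 \<in> V" "word_dot b s0 \<noteq> 0"
    using b by (auto simp: dual_code_def word_dot_commute)
  obtain z where z: "\<psi> z \<noteq> 1" using char_nontrivial by blast
  define t where "t = word_scale (z / word_dot b s0) s0"
  have t: "t \<in> V" "word_dot b t = z"
    using s0 V by (simp_all add: t_def linear_code_scale word_dot_scale_right)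
  have "(\<Sum>s\<in>V. \<psi> (word_dot b s)) = 0"
  proof (rule sum_eq_0_if_bij_betw_scaled[OF bij_betw_word_add[OF V t(1)] _ z])
    fix s assume "s \<in> V"
    then show "\<psi> (word_dot b (word_add s t)) = \<psi> z * \<psi> (word_dot b s)"
      using V t by (simp add: word_dot_add_right linear_code_length char_add mult.commute)
  qed
  then show ?thesis using False by simp
qed

text \<open>Double counting \<open>\<Sum>\<^sub>b \<Sum>\<^sub>s \<psi>(b \<cdot> s)\<close> over all words \<open>b\<close> and codewords \<open>s\<close>.\<close>
lemma card_mult_card_dual_code:
  assumes V: "linear_code n (V :: 'a list set)"
  shows "card V * card (dual_code n V) = CARD('a) ^ n"
proof -
  define U where "U = {x :: 'a list. length x = n}"
  have U: "linear_code n U" "finite U" and V_U: "V \<subseteq> U" and dual_U: "dual_code n V \<subseteq> U"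
    using V linear_code_words finite_words by (auto simp: U_def linear_code_def dual_code_def)
  have "of_nat (card (dual_code n V) * card V) =
      (\<Sum>b\<in>U. if b \<in> dual_code n V then of_nat (card V) else (0 :: complex))"
    using dual_U U(2) by (simp add: sum.If_cases Int_absorb1)
  also have "\<dots> = (\<Sum>b\<in>U. \<Sum>s\<in>V. \<psi> (word_dot b s))"
    by (intro sum.cong refl) (simp add: sum_char_word_dot[OF V] U_def)
  also have "\<dots> = (\<Sum>s\<in>V. \<Sum>b\<in>U. \<psi> (word_dot s b))"
    by (subst sum.swap) (simp only: word_dot_commute)
  also have "\<dots> = (\<Sum>s\<in>V. if s \<in> dual_code n U then of_nat (card U) else 0)"
    using V by (intro sum.cong refl) (simp add: sum_char_word_dot[OF U(1)] linear_code_length)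
  also have "\<dots> = of_nat (card U)"
    using linear_code_zero[OF V] linear_code_finite[OF V] by (simp add: U_def dual_code_words)
  finally have "card (dual_code n V) * card V = card U"
    by (simp only: of_nat_eq_iff)
  then show ?thesis by (simp add: U_def card_words mult.commute)
qed

end

lemma nontrivial_add_char_add_char:
  assumes "CHAR('a::{field,finite}) = p" "CARD('a) = p ^ m"
  shows "nontrivial_add_char (add_char p m :: 'a \<Rightarrow> complex)"
  by unfold_locales (simp_all add: add_char_add[OF assms] add_char_0[OF assms] add_char_nontrivial[OF assms])

lemma sum_fun_apply: "(\<Sum>v\<in>B. f v) i = (\<Sum>v\<in>B. f v i)"
  by (induction B rule: infinite_finite_induct) auto

lemma vector_space_fun: "vector_space (\<lambda>(c::'a::field) (v::'b \<Rightarrow> 'a). (\<lambda>i. c * v i))"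
  by unfold_locales (auto simp: fun_eq_iff algebra_simps)

lemma card_span_independent:
  fixes B :: "('b \<Rightarrow> 'a::{field,finite}) set"
  assumes "finite B" and "module.independent (\<lambda>c v. (\<lambda>i. c * v i)) B"
  shows "card (module.span (\<lambda>c v. (\<lambda>i. c * v i)) B) = CARD('a) ^ card B"
proof -
  interpret vs: vector_space "\<lambda>c v. (\<lambda>i. c * v i) :: 'b \<Rightarrow> 'a" by (rule vector_space_fun)
  define F where "F u = (\<Sum>v\<in>B. (\<lambda>i. u v * v i))" for u :: "('b \<Rightarrow> 'a) \<Rightarrow> 'a"
  have "vs.span B = range F" unfolding F_def by (rule vs.span_finite[OF assms(1)])
  also have "\<dots> = F ` (B \<rightarrow>\<^sub>E UNIV)"
  proof (intro equalityI subsetI)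
    fix y assume "y \<in> range F"
    then obtain u where "y = F u" by blast
    moreover have "F u = F (restrict u B)" unfolding F_def by (intro sum.cong) auto
    ultimately show "y \<in> F ` (B \<rightarrow>\<^sub>E UNIV)" by auto
  qed auto
  finally have span: "vs.span B = F ` (B \<rightarrow>\<^sub>E UNIV)" .
  have "inj_on F (B \<rightarrow>\<^sub>E UNIV)"
  proof (rule inj_onI)
    fix u u' assume u: "u \<in> B \<rightarrow>\<^sub>E UNIV" "u' \<in> B \<rightarrow>\<^sub>E UNIV" and "F u = F u'"
    then have "(\<Sum>v\<in>B. (\<lambda>i. (u v - u' v) * v i)) = 0"
      by (auto simp: F_def fun_eq_iff sum_fun_apply sum_subtractf left_diff_distrib)
    then have "\<forall>v\<in>B. u v - u' v = 0"
      using assms(2)[unfolded vs.independent_explicit_finite_subsets, rule_format, OF order_refl assms(1),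
          of "\<lambda>v. u v - u' v"]
      by blast
    then show "u = u'" using u by (intro extensionalityI[of _ B]) (auto simp: PiE_def)
  qed
  then show ?thesis
    using assms(1) by (simp add: span card_image card_PiE)
qed

lemma inj_on_word_fun: "inj_on word_fun {x :: 'a::zero list. length x = n}"
proof (rule inj_onI)
  fix x y :: "'a list"
  assume len: "x \<in> {x. length x = n}" "y \<in> {x. length x = n}" and eq: "word_fun x = word_fun y"
  show "x = y"
  proof (rule nth_equalityI)
    show "x ! i = y ! i" if "i < length x" for i
      using fun_cong[OF eq, of i] that len by (simp add: word_fun_def)
  qed (use len in simp)
qed

lemma subspace_word_fun_image:
  assumes "linear_code n (C :: 'a::field list set)"
  shows "module.subspace (\<lambda>c v. (\<lambda>i. c * v i)) (word_fun ` C)"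
proof -
  interpret vs: vector_space "\<lambda>c v. (\<lambda>i. c * v i) :: nat \<Rightarrow> 'a" by (rule vector_space_fun)
  show ?thesis
    unfolding vs.subspace_def
  proof (intro conjI ballI allI)
    have "word_fun (replicate n 0) = 0" by (auto simp: word_fun_def)
    then show "0 \<in> word_fun ` C" using linear_code_zero[OF assms] by (metis image_eqI)
  next
    fix x y assume "x \<in> word_fun ` C" "y \<in> word_fun ` C"
    then obtain x' y' where "x' \<in> C" "y' \<in> C" "x = word_fun x'" "y = word_fun y'" by blast
    moreover from this have "x + y = word_fun (word_add x' y')"
      using assms by (auto simp: word_fun_def linear_code_length)
    ultimately show "x + y \<in> word_fun ` C" using assms by (auto intro: linear_code_add)
  next
    fix c x assume "x \<in> word_fun ` C"
    then obtain x' where "x' \<in> C" "x = word_fun x'" by blast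
    moreover from this have "(\<lambda>i. c * x i) = word_fun (word_scale c x')"
      by (auto simp: word_fun_def)
    ultimately show "(\<lambda>i. c * x i) \<in> word_fun ` C" using assms by (auto intro: linear_code_scale)
  qed
qed

lemma card_linear_code:
  assumes "linear_code n (C :: 'a::{field,finite} list set)"
  shows "card C = CARD('a) ^ code_dim C"
proof -
  interpret vs: vector_space "\<lambda>c v. (\<lambda>i. c * v i) :: nat \<Rightarrow> 'a" by (rule vector_space_fun)
  obtain B where B: "B \<subseteq> word_fun ` C" "vs.independent B"
    "word_fun ` C \<subseteq> vs.span B" "card B = vs.dim (word_fun ` C)"
    using vs.basis_exists by blast
  have "finite B"
    using B(1) linear_code_finite[OF assms] finite_subset by blast
  moreover have "vs.span B = word_fun ` C"
    using B(3) vs.span_mono[OF B(1)] vs.span_eq_iff[THEN iffD2, OF subspace_word_fun_image[OF assms]]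
    by auto
  ultimately have "card (word_fun ` C) = CARD('a) ^ vs.dim (word_fun ` C)"
    using card_span_independent[OF _ B(2)] B(4) by simp
  moreover have "inj_on word_fun C"
    by (rule inj_on_subset[OF inj_on_word_fun]) (auto simp: linear_code_length[OF assms])
  ultimately show ?thesis
    by (simp add: code_dim_def card_image)
qed

section \<open>The CSS construction\<close>

locale css_code =
  fixes p m n :: nat and D :: "'a::{field,finite} list set"
  assumes CHAR_eq: "CHAR('a) = p" and CARD_eq: "CARD('a) = p ^ m"
    and linear: "linear_code n D" and dual_subset: "dual_code n D \<subseteq> D"
begin

sublocale nontrivial_add_char "add_char p m :: 'a \<Rightarrow> complex"
  by (rule nontrivial_add_char_add_char[OF CHAR_eq CARD_eq])

lemma code_dim_le_length: "code_dim D \<le> n"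
proof -
  have "card D \<le> card {x :: 'a list. length x = n}"
    using linear by (intro card_mono[OF finite_words]) (auto simp: linear_code_length)
  then have "CARD('a) ^ code_dim D \<le> CARD('a) ^ n"
    by (simp add: card_words card_linear_code[OF linear])
  moreover have "1 < CARD('a)" by (rule one_less_card_field)
  ultimately show ?thesis by (rule power_le_imp_le_exp[rotated])
qed

lemma card_dual: "card (dual_code n D) = CARD('a) ^ (n - code_dim D)"
proof -
  have "CARD('a) ^ code_dim D * card (dual_code n D) = CARD('a) ^ code_dim D * CARD('a) ^ (n - code_dim D)"
    using card_mult_card_dual_code[OF linear] code_dim_le_length
    by (simp add: card_linear_code[OF linear] flip: power_add)
  then show ?thesis by simp
qed

lemma length_le_twice_code_dim: "n \<le> 2 * code_dim D"
proof -
  have "card (dual_code n D) \<le> card D"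
    by (rule card_mono[OF linear_code_finite[OF linear] dual_subset])
  then have "CARD('a) ^ (n - code_dim D) \<le> CARD('a) ^ code_dim D"
    by (simp add: card_dual card_linear_code[OF linear])
  moreover have "1 < CARD('a)" by (rule one_less_card_field)
  ultimately show ?thesis using power_le_imp_le_exp by fastforce
qed

lemma dual_code_dual: "dual_code n (dual_code n D) = D"
proof (rule card_subset_eq[symmetric])
  show "D \<subseteq> dual_code n (dual_code n D)"
    using linear by (auto simp: dual_code_def linear_code_length word_dot_commute)
  have "card (dual_code n D) * card (dual_code n (dual_code n D)) = card (dual_code n D) * card D"
    using card_mult_card_dual_code[OF linear_code_dual_code[of n D]] card_mult_card_dual_code[OF linear]
    by (simp add: mult.commute)
  then show "card D = card (dual_code n (dual_code n D))"
    using card_dual by simp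
qed (rule linear_code_finite[OF linear_code_dual_code])

definition coset :: "'a list \<Rightarrow> 'a list set" where
  "coset x = (\<lambda>s. word_add x s) ` dual_code n D"

definition cosets :: "'a list set set" where
  "cosets = coset ` D"

lemma coset_subset: "x \<in> D \<Longrightarrow> coset x \<subseteq> D"
  unfolding coset_def using dual_subset linear_code_add[OF linear] by blast

lemma self_in_coset: "x \<in> D \<Longrightarrow> x \<in> coset x"
  unfolding coset_def
  by (rule rev_image_eqI[OF linear_code_zero[OF linear_code_dual_code[of n D]]])
    (simp add: word_add_replicate_0 linear_code_length[OF linear])

lemma coset_eq:
  assumes "x \<in> D" "y \<in> coset x"
  shows "coset y = coset x"
proof -
  obtain s0 where s0: "s0 \<in> dual_code n D" "y = word_add x s0"
    using assms(2) unfolding coset_def by blast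
  have len: "length x = n" "length s0 = n"
    using assms(1) s0(1) linear linear_code_dual_code[of n D] by (simp_all add: linear_code_length)
  have "coset y \<subseteq> coset x"
  proof
    fix z assume "z \<in> coset y"
    then obtain s where s: "s \<in> dual_code n D" "z = word_add y s" unfolding coset_def by blast
    then have "z = word_add x (word_add s0 s)"
      using s0 len linear_code_dual_code[of n D] by (simp add: linear_code_length word_add_assoc)
    then show "z \<in> coset x"
      unfolding coset_def using linear_code_add[OF linear_code_dual_code[of n D] s0(1) s(1)] by blast
  qed
  moreover have "coset x \<subseteq> coset y"
  proof
    fix z assume "z \<in> coset x"
    then obtain s where s: "s \<in> dual_code n D" "z = word_add x s" unfolding coset_def by blast
    moreover have "length s = n" using s(1) linear_code_dual_code[of n D] by (simp add: linear_code_length)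
    ultimately have "z = word_add y (word_add s (word_scale (-1) s0))"
      using s0 len by (intro nth_equalityI) simp_all
    then show "z \<in> coset y"
      unfolding coset_def using linear_code_dual_code[of n D] s(1) s0(1) by (blast intro: linear_code_add linear_code_scale)
  qed
  ultimately show ?thesis by blast
qed

lemma card_coset:
  assumes "x \<in> D"
  shows "card (coset x) = card (dual_code n D)"
  unfolding coset_def
proof (rule card_image, rule inj_onI)
  fix s s' assume s: "s \<in> dual_code n D" "s' \<in> dual_code n D" "word_add x s = word_add x s'"
  have "length x = n" "length s = n" "length s' = n"
    using assms s(1,2) linear_code_length[OF linear] linear_code_length[OF linear_code_dual_code[of n D]] by auto
  then show "s = s'" using word_add_left_cancel[OF s(3)] by simp
qed

lemma cosets_disjoint:
  assumes "A \<in> cosets" "B \<in> cosets" "A \<noteq> B"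
  shows "A \<inter> B = {}"
proof (rule ccontr)
  assume "A \<inter> B \<noteq> {}"
  then obtain z where "z \<in> A" "z \<in> B" by blast
  moreover obtain x y where "x \<in> D" "A = coset x" "y \<in> D" "B = coset y"
    using assms(1,2) unfolding cosets_def by blast
  ultimately have "coset z = A" "coset z = B" using coset_eq by blast+
  then show False using assms(3) by simp
qed

lemma card_dual_mult_card_cosets: "card (dual_code n D) * card cosets = card D"
proof -
  have Union: "\<Union>cosets = D"
    unfolding cosets_def using coset_subset self_in_coset by blast
  have "card (dual_code n D) * card cosets = card (\<Union>cosets)"
  proof (rule card_partition)
    show "finite cosets"
      unfolding cosets_def using linear_code_finite[OF linear] by simp
    show "finite (\<Union>cosets)"
      unfolding Union using linear_code_finite[OF linear] .
    show "card A = card (dual_code n D)" if "A \<in> cosets" for A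
      using that card_coset unfolding cosets_def by blast
  qed (rule cosets_disjoint)
  then show ?thesis unfolding Union .
qed

lemma card_cosets: "card cosets = CARD('a) ^ (2 * code_dim D - n)"
proof -
  have "CARD('a) ^ (n - code_dim D) * card cosets = CARD('a) ^ (n - code_dim D) * CARD('a) ^ (2 * code_dim D - n)"
    using card_dual_mult_card_cosets code_dim_le_length length_le_twice_code_dim
    by (simp add: card_dual card_linear_code[OF linear] flip: power_add)
  then show ?thesis by simp
qed

text \<open>In the computational basis, the span of the coset states \<open>|x + D\<^sup>\<perp>\<rangle>\<close>, \<open>x \<in> D\<close>.\<close>
definition css_space :: "('a list \<Rightarrow> complex) set" where
  "css_space = {v. (\<forall>x. x \<notin> D \<longrightarrow> v x = 0) \<and> (\<forall>x\<in>D. \<forall>s\<in>dual_code n D. v (word_add x s) = v x)}"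

lemma indicator_coset_eq:
  assumes "A \<in> cosets" "y \<in> D"
  shows "indicator A y = (if A = coset y then 1 else (0 :: complex))"
proof (cases "y \<in> A")
  case True
  obtain x where "x \<in> D" "A = coset x" using assms(1) unfolding cosets_def by blast
  then have "coset y = A" using coset_eq True by blast
  then show ?thesis using True by simp
next
  case False
  then have "A \<noteq> coset y" using self_in_coset[OF assms(2)] by blast
  then show ?thesis using False by simp
qed

lemma indicator_coset_in_css_space:
  assumes "A \<in> cosets"
  shows "indicator A \<in> css_space"
  unfolding css_space_def
proof (intro CollectI conjI allI impI ballI)
  fix x assume "x \<notin> D"
  then show "indicator A x = (0 :: complex)"
    using assms coset_subset unfolding cosets_def by (auto simp: indicator_def)
next
  fix x s assume x: "x \<in> D" and s: "s \<in> dual_code n D"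
  then have "word_add x s \<in> D" using dual_subset linear_code_add[OF linear] by blast
  moreover have "coset (word_add x s) = coset x"
    using coset_eq[OF x] s unfolding coset_def by blast
  ultimately show "indicator A (word_add x s) = (indicator A x :: complex)"
    using indicator_coset_eq[OF assms] x by simp
qed

lemma css_space_subset_span:
  "css_space \<subseteq> module.span (\<lambda>c v. (\<lambda>x. c * v x)) (indicator ` cosets)"
proof
  interpret vs: vector_space "\<lambda>c v. (\<lambda>x. c * v x) :: 'a list \<Rightarrow> complex" by (rule vector_space_fun)
  fix v assume v: "v \<in> css_space"
  have "v = (\<Sum>A\<in>cosets. (\<lambda>y. v (SOME x. x \<in> A) * indicator A y))"
  proof
    fix y
    show "v y = (\<Sum>A\<in>cosets. (\<lambda>y. v (SOME x. x \<in> A) * indicator A y)) y"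
    proof (cases "y \<in> D")
      case True
      have "(SOME x. x \<in> coset y) \<in> coset y" using self_in_coset[OF True] by (rule someI)
      then have "v (SOME x. x \<in> coset y) = v y"
        using v True unfolding css_space_def coset_def by auto
      moreover have "coset y \<in> cosets" using True unfolding cosets_def by blast
      moreover have "finite cosets" using linear_code_finite[OF linear] by (simp add: cosets_def)
      ultimately show ?thesis
        using True by (simp add: sum_fun_apply indicator_coset_eq if_distrib[of "\<lambda>x. _ * x"] cong: if_cong)
    next
      case False
      then have "indicator A y = (0 :: complex)" if "A \<in> cosets" for A
        using that coset_subset by (auto simp: cosets_def indicator_def)
      then show ?thesis using v False by (simp add: sum_fun_apply css_space_def)
    qed
  qed
  also have "\<dots> \<in> vs.span (indicator ` cosets)"
    by (intro vs.span_sum vs.span_scale vs.span_base) blast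
  finally show "v \<in> vs.span (indicator ` cosets)" .
qed

lemma independent_indicator_cosets:
  "module.independent (\<lambda>c v. (\<lambda>x. c * v x)) (indicator ` cosets :: ('a list \<Rightarrow> complex) set)"
proof -
  interpret vs: vector_space "\<lambda>c v. (\<lambda>x. c * v x) :: 'a list \<Rightarrow> complex" by (rule vector_space_fun)
  show ?thesis
  proof (rule vs.independent_if_scalars_zero)
    show "finite (indicator ` cosets :: ('a list \<Rightarrow> complex) set)"
      using linear_code_finite[OF linear] by (simp add: cosets_def)
  next
    fix f :: "('a list \<Rightarrow> complex) \<Rightarrow> complex" and e :: "'a list \<Rightarrow> complex"
    assume sum: "(\<Sum>x\<in>indicator ` cosets. (\<lambda>y. f x * x y)) = 0" and e: "e \<in> indicator ` cosets"
    then obtain x0 where x0: "x0 \<in> D" "e = indicator (coset x0)" by (auto simp: cosets_def)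
    have "f e' * e' x0 = (if e' = e then f e' else 0)" if "e' \<in> indicator ` cosets" for e'
      using that x0 indicator_coset_eq[OF _ x0(1)] by (auto simp: cosets_def split: if_splits)
    then have "(\<Sum>x\<in>indicator ` cosets. f x * x x0) = (\<Sum>x\<in>indicator ` cosets. if x = e then f x else 0)"
      by (rule sum.cong[OF refl])
    then have "0 = (\<Sum>x\<in>indicator ` cosets. if x = e then f x else 0)"
      using fun_cong[OF sum, of x0] by (simp add: sum_fun_apply)
    also have "\<dots> = f e"
      using e linear_code_finite[OF linear] by (simp add: cosets_def)
    finally show "f e = 0" by simp
  qed
qed

lemma dim_css_space: "vector_space.dim (\<lambda>c v. (\<lambda>x. c * v x)) css_space = card cosets"
proof -
  interpret vs: vector_space "\<lambda>c v. (\<lambda>x. c * v x) :: 'a list \<Rightarrow> complex" by (rule vector_space_fun)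
  have "inj_on (indicator :: 'a list set \<Rightarrow> 'a list \<Rightarrow> complex) cosets"
    by (rule inj_onI) (metis indicator_eq_1_iff one_neq_zero subsetI subset_antisym)
  then have "card (indicator ` cosets :: ('a list \<Rightarrow> complex) set) = card cosets"
    by (rule card_image)
  moreover have "card (indicator ` cosets :: ('a list \<Rightarrow> complex) set) = vs.dim css_space"
    using indicator_coset_in_css_space css_space_subset_span independent_indicator_cosets
    by (intro vs.basis_card_eq_dim) auto
  ultimately show ?thesis by simp
qed

lemma min_dist_le_weight:
  assumes "x \<in> D" "x \<noteq> replicate n 0"
  shows "min_dist D \<le> card {i. i < n \<and> x ! i \<noteq> 0}"
proof -
  define S where "S = {hamming_dist x y | x y. x \<in> D \<and> y \<in> D \<and> x \<noteq> y}"
  have "S \<subseteq> (\<lambda>(x, y). hamming_dist x y) ` (D \<times> D)" unfolding S_def by auto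
  then have "finite S" by (rule finite_subset) (simp add: linear_code_finite[OF linear])
  moreover have "hamming_dist x (replicate n 0) \<in> S"
    unfolding S_def using assms linear_code_zero[OF linear] by blast
  moreover have "hamming_dist x (replicate n 0) = card {i. i < n \<and> x ! i \<noteq> 0}"
    unfolding hamming_dist_def using linear_code_length[OF linear assms(1)]
    by (intro arg_cong[where f = card]) auto
  ultimately show ?thesis unfolding min_dist_def S_def[symmetric] by (metis Min_le)
qed

lemma css_space_word_add:
  assumes "v \<in> css_space" "s \<in> dual_code n D" "length y = n"
  shows "v (word_add y s) = v y"
proof (cases "y \<in> D")
  case False
  have "length s = n" using assms(2) by (simp add: dual_code_def)
  then have "word_add (word_add y s) (word_scale (-1) s) = y"
    using assms(3) by (simp add: word_add_scale_cancel)
  then have "word_add y s \<notin> D"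
    using False assms(2) dual_subset linear by (metis linear_code_add linear_code_scale subsetD)
  then show ?thesis using assms(1) False by (simp add: css_space_def)
qed (use assms in \<open>simp add: css_space_def\<close>)

lemma qinner_pauli_err_eq_0_if_shift_not_in_code:
  assumes "u \<in> css_space" "v \<in> css_space" "length a = n" "a \<notin> D"
  shows "qinner n u (pauli_err p m n a b v) = 0"
  unfolding qinner_def
proof (rule sum.neutral, intro ballI)
  fix y :: "'a list" assume "y \<in> {x. length x = n}"
  have "\<not> (y \<in> D \<and> map2 (-) y a \<in> D)"
  proof
    assume "y \<in> D \<and> map2 (-) y a \<in> D"
    then have "map2 (-) y (map2 (-) y a) \<in> D" by (blast intro: linear_code_diff[OF linear])
    moreover have "map2 (-) y (map2 (-) y a) = a"
      using \<open>y \<in> _\<close> assms(3) by (intro nth_equalityI) auto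
    ultimately show False using assms(4) by simp
  qed
  then show "cnj (u y) * pauli_err p m n a b v y = 0"
    using assms(1,2) by (auto simp: css_space_def pauli_err_def)
qed

lemma pauli_err_replicate_0:
  "length y = n \<Longrightarrow> pauli_err p m n (replicate n 0) b v y = add_char p m (word_dot b y) * v y"
proof -
  assume "length y = n"
  then have "map2 (-) y (replicate n 0) = y" by (intro nth_equalityI) simp_all
  then show ?thesis using \<open>length y = n\<close> by (simp add: pauli_err_def)
qed

text \<open>Since \<open>b \<notin> D = (D\<^sup>\<perp>)\<^sup>\<perp>\<close>, some \<open>t \<in> D\<^sup>\<perp>\<close> has \<open>add_char p m (b \<cdot> t) \<noteq> 1\<close>; translating
  by \<open>t\<close> fixes \<open>u\<close> and \<open>v\<close> but multiplies the inner product by that value.\<close>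
lemma qinner_phase_err_eq_0_if_not_in_code:
  assumes u: "u \<in> css_space" and v: "v \<in> css_space" and b: "length b = n" "b \<notin> D"
  shows "qinner n u (pauli_err p m n (replicate n 0) b v) = 0"
proof -
  have "b \<notin> dual_code n (dual_code n D)" using b(2) by (simp add: dual_code_dual)
  then obtain s where s: "s \<in> dual_code n D" "word_dot b s \<noteq> 0"
    using b(1) by (auto simp: dual_code_def word_dot_commute)
  obtain z :: 'a where z: "add_char p m z \<noteq> 1" using char_nontrivial by blast
  define t where "t = word_scale (z / word_dot b s) s"
  have t: "t \<in> dual_code n D" "word_dot b t = z"
    using s by (simp_all add: t_def linear_code_scale[OF linear_code_dual_code[of n D]] word_dot_scale_right)
  have "length t = n" using t(1) by (simp add: dual_code_def)
  then have "linear_code n {x :: 'a list. length x = n}" "t \<in> {x. length x = n}"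
    by (simp_all add: linear_code_words)
  note shift = bij_betw_word_add[OF this]
  have "qinner n u (pauli_err p m n (replicate n 0) b v) =
      (\<Sum>y\<in>{x. length x = n}. cnj (u y) * (add_char p m (word_dot b y) * v y))"
    unfolding qinner_def by (intro sum.cong refl) (simp add: pauli_err_replicate_0)
  also have "\<dots> = 0"
  proof (rule sum_eq_0_if_bij_betw_scaled[OF shift _ z])
    fix y :: "'a list" assume "y \<in> {x. length x = n}"
    then show "cnj (u (word_add y t)) * (add_char p m (word_dot b (word_add y t)) * v (word_add y t)) =
        add_char p m z * (cnj (u y) * (add_char p m (word_dot b y) * v y))"
      using \<open>length t = n\<close> t
      by (simp add: css_space_word_add[OF u t(1)] css_space_word_add[OF v t(1)] word_dot_add_right char_add)
  qed
  finally show ?thesis .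
qed

lemma css_space_detects:
  assumes a: "length a = n" and b: "length b = n" and weight: "pauli_weight a b < min_dist D"
  shows "\<exists>c. \<forall>u\<in>css_space. \<forall>v\<in>css_space. qinner n u (pauli_err p m n a b v) = c * qinner n u v"
proof -
  have "card {i. i < n \<and> a ! i \<noteq> 0} \<le> pauli_weight a b"
    "card {i. i < n \<and> b ! i \<noteq> 0} \<le> pauli_weight a b"
    unfolding pauli_weight_def using a by (intro card_mono; auto)+
  then have weight_a: "card {i. i < n \<and> a ! i \<noteq> 0} < min_dist D"
    and weight_b: "card {i. i < n \<and> b ! i \<noteq> 0} < min_dist D"
    using weight by linarith+
  consider "a \<notin> D" | "a = replicate n 0" "b \<notin> D" | "a = replicate n 0" "b = replicate n 0"
    using min_dist_le_weight weight_a weight_b by fastforce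
  then show ?thesis
  proof cases
    case 1
    then show ?thesis using qinner_pauli_err_eq_0_if_shift_not_in_code a by auto
  next
    case 2
    then show ?thesis using qinner_phase_err_eq_0_if_not_in_code b by auto
  next
    case 3
    then have "qinner n u (pauli_err p m n a b v) = qinner n u v" for u v
      unfolding qinner_def by (intro sum.cong refl) (simp add: pauli_err_replicate_0 char_0)
    then show ?thesis by (intro exI[of _ 1]) simp
  qed
qed

lemma quantum_code_css_space: "quantum_code p m n (2 * code_dim D - n) (min_dist D) css_space"
  unfolding quantum_code_def
proof (intro conjI ballI allI impI)
  fix v and x :: "'a list" assume "v \<in> css_space" "length x \<noteq> n"
  then show "v x = 0" using linear_code_length[OF linear] by (auto simp: css_space_def)
next
  show "vector_space.dim (\<lambda>c v. (\<lambda>x. c * v x)) css_space = (p ^ m) ^ (2 * code_dim D - n)"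
    by (simp add: dim_css_space card_cosets CARD_eq)
next
  fix a b :: "'a list" assume "length a = n" "length b = n" "pauli_weight a b < min_dist D"
  then show "\<exists>c. \<forall>u\<in>css_space. \<forall>v\<in>css_space. qinner n u (pauli_err p m n a b v) = c * qinner n u v"
    by (rule css_space_detects)
qed (auto simp: css_space_def)

end

theorem theorem12:
  fixes p m i \<alpha> \<beta> :: nat
    and f h g1 g2 h1 h2 :: "'a::{field,finite} poly"
    and M :: "'a ^2^2" and \<gamma> :: 'a
  defines "Th \<equiv> (\<lambda>a::'a. a ^ (p ^ i))"
  assumes "prime p" and "CARD('a) = p ^ m" and "of_nat p = (0::'a)"
    and "\<alpha> > 0" and "\<beta> > 0"
    and "aut_order Th dvd \<alpha>" and "aut_order (R_theta Th) dvd \<beta>"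
    and "xn1 \<alpha> = skew_mult Th h f"
    and "xn1 \<beta> = skew_mult Th h1 g1" and "xn1 \<beta> = skew_mult Th h2 g2"
    and "FqR_skew_cyclic Th \<alpha> \<beta>
           (code_tensor (skew_code_gen Th \<alpha> f)
              (xi_sum (skew_code_gen Th \<beta> g1) (skew_code_gen Th \<beta> g2)))"
    and "right_dvd Th (xn1 \<alpha>) (skew_mult Th (skew_dagger Th h) h)"
    and "right_dvd Th (xn1 \<beta>) (skew_mult Th (skew_dagger Th h1) h1)"
    and "right_dvd Th (xn1 \<beta>) (skew_mult Th (skew_dagger Th h2) h2)"
    and "invertible M" and "\<gamma> \<noteq> 0"
    and "M ** Finite_Cartesian_Product.transpose M = mat \<gamma>"
  shows "let C = code_tensor (skew_code_gen Th \<alpha> f)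
                   (xi_sum (skew_code_gen Th \<beta> g1) (skew_code_gen Th \<beta> g2));
             GC = gray M ` C; n = \<alpha> + 2 * \<beta>; k = code_dim GC; dH = min_dist GC
         in 2 * k \<ge> n \<and>
            (\<exists>Q :: ('a list \<Rightarrow> complex) set. quantum_code p m n (2 * k - n) dH Q)"
proof -
  have CHAR: "CHAR('a) = p" by (rule CHAR_eq_prime) fact+
  interpret field_endo Th
    unfolding Th_def by (rule field_endo_frobenius[OF CHAR assms(3)])
  have "Th ^^ m = id" unfolding Th_def by (rule frobenius_funpow_exponent[OF CHAR assms(3)])
  then have Th_\<alpha>: "Th ^^ \<alpha> = id" and Th_\<beta>: "Th ^^ \<beta> = id"
    using CARD_exponent_pos[OF CHAR assms(3)] assms(7,8)
    by (auto intro: funpow_eq_id_if_aut_order_dvd funpow_eq_id_if_aut_order_R_theta_dvd)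
  define A B1 B2 where "A = skew_code_gen Th \<alpha> f"
    and "B1 = skew_code_gen Th \<beta> g1" and "B2 = skew_code_gen Th \<beta> g2"
  have "linear_code \<alpha> A" "linear_code \<beta> B1" "linear_code \<beta> B2"
    unfolding A_def B1_def B2_def using assms(5,6) by (simp_all add: linear_code_skew_code_gen)
  moreover have "dual_code \<alpha> A \<subseteq> A" "dual_code \<beta> B1 \<subseteq> B1" "dual_code \<beta> B2 \<subseteq> B2"
    unfolding A_def B1_def B2_def
    using dual_skew_code_gen_subset[OF assms(5) Th_\<alpha> assms(9) assms(13)]
      dual_skew_code_gen_subset[OF assms(6) Th_\<beta> assms(10) assms(14)]
      dual_skew_code_gen_subset[OF assms(6) Th_\<beta> assms(11) assms(15)]
    by blast+
  ultimately interpret css_code p m "\<alpha> + 2 * \<beta>" "gray_product M A B1 B2"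
    using CHAR assms(3,16-18)
    by unfold_locales (simp_all add: linear_code_gray_product dual_code_gray_product_subset)
  show ?thesis
    using length_le_twice_code_dim quantum_code_css_space
    by (auto simp: Let_def gray_image_code_tensor A_def B1_def B2_def)
qed

end
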